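(* Let $j\in\mathbb{N}$, let $u$ be a (smooth, sufficiently decaying) solution of the $j$th dNLS hierarchy equation and let $v=\mathcal{G}_-(u)$. Write $G_u=\exp\big(-i\int_{-\infty}^x|u(y,t)|^2dy\big)$, so that $i\partial_tv+(-1)^{j+1}\partial_x^{2j}v=G_u\big(i\partial_tu+(-1)^{j+1}\partial_x^{2j}u+P\big)$, where $P$ is computed by the Leibniz rule, substituting the $j$th dNLS hierarchy equation for $\partial_tu,\partial_t\overline u$ inside the integral $\int_{-\infty}^x\partial_t|u|^2$. Then the coefficient of the `bad' cubic term $(\partial_x^{2j-1-\ell}u)\,\overline{u}\,(\partial_x^{\ell}u)$ ($0\le \ell\le 2j-1$; cubic terms with no derivative on $\overline u$) in this expression, written in terms of $u$, is $$i(-1)^{j+1}\Big(\binom{2j+1}{\ell+1}-\delta_{0,\ell}-\delta_{2j-1,\ell}\Big).$$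
   Context: The gauge-transformations are $\mathcal{G}_\pm:u(x,t)\mapsto\exp\big(\pm i\int_{-\infty}^x|u(y,t)|^2dy\big)u(x,t)$. Define recursively $Y_0=-\frac{r}{2i}$, $Y_{n+1}=\frac{1}{2i}\big[\partial_xY_n+q\sum_{k=0}^nY_{n-k}Y_k\big]$, with $q=u$, $r=\overline u$. The $j$th dNLS hierarchy equation is $i\partial_tu=2\alpha_{2j-1}\partial_x\frac{\delta}{\delta\overline u}\int_{\mathbb{R}}uY_{2j-1}dx$ with $\alpha_{2j-1}=2^{2j-1}$, where $\frac{\delta}{\delta\phi}\int f(\phi,\dots,\partial_x^N\phi)dx=\sum_{k=0}^N(-1)^k\partial_x^k\frac{\partial f}{\partial(\partial_x^k\phi)}$; it has the form $i\partial_tu+(-1)^{j+1}\partial_x^{2j}u=$ (nonlinear terms). *)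

theory Defs
  imports Complex_Main "HOL-Library.Poly_Mapping"
begin

text \<open>Differential variables: Uv k stands for the k-th x-derivative of u (= q),
  Rv k for the k-th x-derivative of the conjugate of u (= r).\<close>
datatype dvar = Uv nat | Rv nat

type_synonym dmono = "dvar \<Rightarrow>\<^sub>0 nat"
type_synonym dpoly = "dmono \<Rightarrow>\<^sub>0 complex"

definition dconst :: "complex \<Rightarrow> dpoly" where
  "dconst c = Poly_Mapping.single 0 c"

definition dmonom :: "dmono \<Rightarrow> dpoly" where
  "dmonom m = Poly_Mapping.single m 1"

definition dvarp :: "dvar \<Rightarrow> dpoly" where
  "dvarp x = dmonom (Poly_Mapping.single x 1)"

definition coeff_d :: "dpoly \<Rightarrow> dmono \<Rightarrow> complex" where
  "coeff_d p m = Poly_Mapping.lookup p m"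

fun dsucc :: "dvar \<Rightarrow> dvar" where
  "dsucc (Uv k) = Uv (Suc k)"
| "dsucc (Rv k) = Rv (Suc k)"

fun dswap :: "dvar \<Rightarrow> dvar" where
  "dswap (Uv k) = Rv k"
| "dswap (Rv k) = Uv k"

definition Dmono :: "dmono \<Rightarrow> dpoly" where
  "Dmono m = (\<Sum>x\<in>Poly_Mapping.keys m.
      dconst (of_nat (Poly_Mapping.lookup m x)) *
      dmonom (m - Poly_Mapping.single x 1 + Poly_Mapping.single (dsucc x) 1))"

definition Dx :: "dpoly \<Rightarrow> dpoly" where
  "Dx p = (\<Sum>m\<in>Poly_Mapping.keys p. dconst (Poly_Mapping.lookup p m) * Dmono m)"

definition pderiv_d :: "dvar \<Rightarrow> dpoly \<Rightarrow> dpoly" where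
  "pderiv_d x p = (\<Sum>m\<in>Poly_Mapping.keys p.
      dconst (Poly_Mapping.lookup p m * of_nat (Poly_Mapping.lookup m x)) *
      (if x \<in> Poly_Mapping.keys m then dmonom (m - Poly_Mapping.single x 1) else 0))"

definition swap_mono :: "dmono \<Rightarrow> dmono" where
  "swap_mono m = (\<Sum>x\<in>Poly_Mapping.keys m. Poly_Mapping.single (dswap x) (Poly_Mapping.lookup m x))"

definition conj_d :: "dpoly \<Rightarrow> dpoly" where
  "conj_d p = (\<Sum>m\<in>Poly_Mapping.keys p. dconst (cnj (Poly_Mapping.lookup p m)) * dmonom (swap_mono m))"

text \<open>variational derivative with respect to conj u of the functional with density f:
  sum over k of (-1)^k D^k (df / d(r_k))\<close>
definition rorders :: "dpoly \<Rightarrow> nat set" where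
  "rorders f = {k. Rv k \<in> (\<Union>m\<in>Poly_Mapping.keys f. Poly_Mapping.keys m)}"

definition vder_r :: "dpoly \<Rightarrow> dpoly" where
  "vder_r f = (\<Sum>k\<in>rorders f. dconst ((-1) ^ k) * (Dx ^^ k) (pderiv_d (Rv k) f))"

abbreviation qd :: dpoly where "qd \<equiv> dvarp (Uv 0)"
abbreviation rd :: dpoly where "rd \<equiv> dvarp (Rv 0)"

fun Yd :: "nat \<Rightarrow> dpoly" where
  "Yd 0 = - dconst (1 / (2 * \<i>)) * rd"
| "Yd (Suc n) = dconst (1 / (2 * \<i>)) *
      (Dx (Yd n) + qd * (\<Sum>k\<in>{..n}. Yd (n - k) * Yd k))"

text \<open>alpha_{2j-1} = 2^(2j-1)\<close>
definition alpha_d :: "nat \<Rightarrow> complex" where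
  "alpha_d j = 2 ^ (2 * j - 1)"

text \<open>right-hand side of the j-th dNLS hierarchy equation: i u_t = hier_rhs j\<close>
definition hier_rhs :: "nat \<Rightarrow> dpoly" where
  "hier_rhs j = dconst (2 * alpha_d j) * Dx (vder_r (qd * Yd (2 * j - 1)))"

text \<open>u_t, and i u_t + (-1)^(j+1) d_x^(2j) u written in terms of u (the nonlinearity)\<close>
definition ut_d :: "nat \<Rightarrow> dpoly" where
  "ut_d j = dconst (- \<i>) * hier_rhs j"

definition hier_lhs :: "nat \<Rightarrow> dpoly" where
  "hier_lhs j = hier_rhs j + dconst ((-1) ^ (j + 1)) * dvarp (Uv (2 * j))"

definition dt_mass :: "nat \<Rightarrow> dpoly" where
  "dt_mass j = rd * ut_d j + qd * conj_d (ut_d j)"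

text \<open>the integral from -infinity to x of d_t |u|^2: the (unique) differential polynomial
  without constant term whose x-derivative is d_t |u|^2\<close>
definition mass_flux :: "nat \<Rightarrow> dpoly" where
  "mass_flux j = (THE F. Dx F = dt_mass j \<and> Poly_Mapping.lookup F 0 = 0)"

text \<open>g k = (d_x^k G_u) / G_u, where d_x G_u = - i |u|^2 G_u\<close>
fun gG :: "nat \<Rightarrow> dpoly" where
  "gG 0 = 1"
| "gG (Suc k) = Dx (gG k) - dconst \<i> * qd * rd * gG k"

text \<open>P from  i v_t + (-1)^(j+1) d^(2j) v = G_u (i u_t + (-1)^(j+1) d^(2j) u + P)\<close>
definition gaugeP :: "nat \<Rightarrow> dpoly" where
  "gaugeP j = qd * mass_flux j
     + dconst ((-1) ^ (j + 1)) *
       (\<Sum>k\<in>{1..2 * j}. dconst (of_nat (2 * j choose k)) * gG k * dvarp (Uv (2 * j - k)))"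

definition bad_mono :: "nat \<Rightarrow> nat \<Rightarrow> dmono" where
  "bad_mono j l = Poly_Mapping.single (Uv (2 * j - 1 - l)) 1 + Poly_Mapping.single (Rv 0) 1
                  + Poly_Mapping.single (Uv l) 1"

end

theory Submission
  imports Defs "HOL-Computational_Algebra.Formal_Power_Series"
begin

text \<open>
  A bad monomial u_a r_0 u_l is linear in r and contains no
  derivative of r, so its coefficient in p is the coefficient of u_a u_l in the derivative
  of p in r_0, evaluated at r = 0; this evaluation is a ring homomorphism commuting with
  the x-derivative.

  At r = 0 the recursion for Y_n gives Y_n = 0, dY_n/dr_k = - kappa^(n+1) [k = n] and
  d^2 Y_n/dr_0 dr_k = 2 kappa^(n+2) (n choose k) u_(n-1-k), where kappa = 1/(2i). The
  variational derivative then writes the coefficient of the hierarchy as an alternating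
  binomial sum, which evaluates to (2j+1 choose l+1) - [l = 0] - [l = 2j-1].

  For the gauge term, the flux of |u|^2 must first exist as a differential polynomial.
  The generating function of the Y_n satisfies a Riccati equation, which exhibits the
  conserved densities q Y_n + conj(q Y_n) as coefficients of the x-derivative of
  -log(1 - t Y conj Y); integrating by parts then shows that the time derivative of |u|^2
  is a total x-derivative. Only the linear part of the flux enters, and it is fixed up to a
  constant by its x-derivative. The derivatives of the gauge factor contribute - i u_(k-1)
  at r = 0, and Pascal's rule turns their Leibniz sum into (2j+1 choose l+1).
\<close>

section \<open>Monomials and coefficients\<close>

lemma dconst_add: "dconst (a + b) = dconst a + dconst b"
  by (simp add: dconst_def single_add)

lemma dconst_mult: "dconst (a * b) = dconst a * dconst b"
  by (simp add: dconst_def mult_single)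

lemma dconst_uminus: "dconst (- a) = - dconst a"
  by (simp add: dconst_def single_uminus)

lemma dconst_0 [simp]: "dconst 0 = 0"
  by (simp add: dconst_def)

lemma dconst_1 [simp]: "dconst 1 = 1"
  by (simp add: dconst_def)

lemma dconst_of_nat [simp]: "dconst (of_nat n) = of_nat n"
  by (simp add: dconst_def)

lemma dconst_numeral [simp]: "dconst (numeral n) = numeral n"
  by (simp add: dconst_def)

lemma lookup_dconst: "Poly_Mapping.lookup (dconst c) m = (if m = 0 then c else 0)"
  by (simp add: dconst_def lookup_single when_def)

lemma lookup_dconst_mult: "Poly_Mapping.lookup (dconst c * p) m = c * Poly_Mapping.lookup p m"
  by (simp add: dconst_def Poly_Mapping.map.rep_eq when_def flip: mult_map_scale_conv_mult)

lemma lookup_dmonom: "Poly_Mapping.lookup (dmonom m) m' = (if m' = m then 1 else 0)"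
  by (simp add: dmonom_def lookup_single when_def)

lemma lookup_dvarp: "Poly_Mapping.lookup (dvarp x) m = (if m = Poly_Mapping.single x 1 then 1 else 0)"
  by (simp add: dvarp_def lookup_dmonom)

lemma keys_dmonom [simp]: "Poly_Mapping.keys (dmonom m) = {m}"
  by (simp add: dmonom_def)

lemma dmonom_0 [simp]: "dmonom 0 = 1"
  by (simp add: dmonom_def)

lemma dmonom_add: "dmonom (a + b) = dmonom a * dmonom b"
  by (simp add: dmonom_def mult_single)

lemma keys_add_dmono: "Poly_Mapping.keys (a + b :: dmono) = Poly_Mapping.keys a \<union> Poly_Mapping.keys b"
  by (auto simp: in_keys_iff lookup_add)

lemma dmonom_sum: "dmonom (\<Sum>i\<in>I. g i) = (\<Prod>i\<in>I. dmonom (g i))"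
  by (induction I rule: infinite_finite_induct) (auto simp: dmonom_add)

lemma dmonom_single: "dmonom (Poly_Mapping.single x e) = dvarp x ^ e"
proof (induction e)
  case (Suc e)
  have "Poly_Mapping.single x (Suc e) = Poly_Mapping.single x e + Poly_Mapping.single x 1"
    by (simp flip: single_add)
  then show ?case
    using Suc by (simp add: dmonom_add dvarp_def)
qed simp

lemma dmono_eq_sum_single:
  "(m :: dmono) = (\<Sum>x\<in>Poly_Mapping.keys m. Poly_Mapping.single x (Poly_Mapping.lookup m x))"
proof (rule poly_mapping_eqI)
  fix k
  have "(\<Sum>x\<in>Poly_Mapping.keys m. Poly_Mapping.lookup (Poly_Mapping.single x (Poly_Mapping.lookup m x)) k)
      = (\<Sum>x\<in>Poly_Mapping.keys m. if x = k then Poly_Mapping.lookup m x else 0)"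
    by (rule sum.cong) (auto simp: lookup_single when_def)
  also have "\<dots> = Poly_Mapping.lookup m k"
    by (simp add: sum.delta' in_keys_iff)
  finally show "Poly_Mapping.lookup m k = Poly_Mapping.lookup (\<Sum>x\<in>Poly_Mapping.keys m.
      Poly_Mapping.single x (Poly_Mapping.lookup m x)) k"
    by (simp add: lookup_sum)
qed

lemma dmonom_eq_prod_dvarp:
  "dmonom m = (\<Prod>x\<in>Poly_Mapping.keys m. dvarp x ^ Poly_Mapping.lookup m x)"
  by (subst dmono_eq_sum_single) (simp add: dmonom_sum dmonom_single)

lemma dpoly_eq_sum_monoms:
  "p = (\<Sum>m\<in>Poly_Mapping.keys p. dconst (Poly_Mapping.lookup p m) * dmonom m)"
proof (rule poly_mapping_eqI)
  fix k
  have "(\<Sum>m\<in>Poly_Mapping.keys p. Poly_Mapping.lookup p m * (if k = m then 1 else 0)) =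
        (\<Sum>m\<in>Poly_Mapping.keys p. if k = m then Poly_Mapping.lookup p m else 0)"
    by (rule sum.cong) auto
  also have "\<dots> = Poly_Mapping.lookup p k"
    by (simp add: sum.delta in_keys_iff)
  finally show "Poly_Mapping.lookup p k = Poly_Mapping.lookup
      (\<Sum>m\<in>Poly_Mapping.keys p. dconst (Poly_Mapping.lookup p m) * dmonom m) k"
    by (simp add: lookup_sum lookup_dconst_mult lookup_dmonom)
qed

lemma mult_eq_sum_monoms: "p * q = (\<Sum>a\<in>Poly_Mapping.keys p. \<Sum>b\<in>Poly_Mapping.keys q.
      dconst (Poly_Mapping.lookup p a * Poly_Mapping.lookup q b) * dmonom (a + b))"
proof -
  have "p * q = (\<Sum>a\<in>Poly_Mapping.keys p. dconst (Poly_Mapping.lookup p a) * dmonom a) *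
                (\<Sum>b\<in>Poly_Mapping.keys q. dconst (Poly_Mapping.lookup q b) * dmonom b)"
    using dpoly_eq_sum_monoms[of p] dpoly_eq_sum_monoms[of q] by simp
  also have "\<dots> = (\<Sum>a\<in>Poly_Mapping.keys p. \<Sum>b\<in>Poly_Mapping.keys q.
      dconst (Poly_Mapping.lookup p a * Poly_Mapping.lookup q b) * dmonom (a + b))"
    by (simp add: sum_product dconst_mult dmonom_add mult_ac)
  finally show ?thesis .
qed

definition dvars :: "dpoly \<Rightarrow> dvar set" where
  "dvars p = (\<Union>m\<in>Poly_Mapping.keys p. Poly_Mapping.keys m)"

lemma finite_dvars [simp]: "finite (dvars p)"
  by (simp add: dvars_def)

lemma dpoly_induct_dvars [consumes 1, case_names dconst dvarp add mult]:
  fixes P :: "dpoly \<Rightarrow> bool"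
  assumes "dvars p \<subseteq> V"
    and dconst: "\<And>c. P (dconst c)" and dvarp: "\<And>x. x \<in> V \<Longrightarrow> P (dvarp x)"
    and add: "\<And>a b. P a \<Longrightarrow> P b \<Longrightarrow> P (a + b)"
    and mult: "\<And>a b. P a \<Longrightarrow> P b \<Longrightarrow> P (a * b)"
  shows "P p"
proof -
  have one: "P 1"
    using dconst[of 1] by simp
  have power: "P (dvarp x ^ n)" if "x \<in> V" for x n
    by (induction n) (auto simp: one mult dvarp that)
  have "P (\<Prod>x\<in>X. dvarp x ^ f x)" if "finite X" "X \<subseteq> V" for X f
    using that by (induction X rule: finite_induct) (auto simp: one mult power)
  then have monom: "P (dmonom m)" if "Poly_Mapping.keys m \<subseteq> V" for m
    using that by (simp add: dmonom_eq_prod_dvarp)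
  have "P (\<Sum>m\<in>K. dconst (c m) * dmonom m)"
    if "finite K" "\<forall>m\<in>K. Poly_Mapping.keys m \<subseteq> V" for K c
    using that by (induction K rule: finite_induct) (use dconst[of 0] in \<open>auto intro!: add mult dconst monom\<close>)
  from this[of "Poly_Mapping.keys p"]
  have "P (\<Sum>m\<in>Poly_Mapping.keys p. dconst (Poly_Mapping.lookup p m) * dmonom m)"
    using \<open>dvars p \<subseteq> V\<close> by (auto simp: dvars_def)
  then show ?thesis
    by (simp flip: dpoly_eq_sum_monoms)
qed

lemmas dpoly_induct = dpoly_induct_dvars[OF subset_UNIV, case_names dconst dvarp add mult]

section \<open>Linear extensions, derivations and conjugation\<close>

definition extend :: "(complex \<Rightarrow> complex) \<Rightarrow> (dmono \<Rightarrow> dpoly) \<Rightarrow> dpoly \<Rightarrow> dpoly" where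
  "extend g f p = (\<Sum>m\<in>Poly_Mapping.keys p. dconst (g (Poly_Mapping.lookup p m)) * f m)"

locale coeff_hom =
  fixes g :: "complex \<Rightarrow> complex"
  assumes add: "g (a + b) = g a + g b"
    and mult: "g (a * b) = g a * g b"
    and one: "g 1 = 1"
begin

lemma zero: "g 0 = 0"
  using add[of 0 0] by simp

lemma extend_superset:
  assumes "finite S" "Poly_Mapping.keys p \<subseteq> S"
  shows "extend g f p = (\<Sum>m\<in>S. dconst (g (Poly_Mapping.lookup p m)) * f m)"
  unfolding extend_def
  by (rule sum.mono_neutral_left[OF assms]) (auto simp: in_keys_iff zero)

lemma extend_add: "extend g f (p + q) = extend g f p + extend g f q"
proof -
  let ?S = "Poly_Mapping.keys p \<union> Poly_Mapping.keys q"
  have "extend g f (p + q) = (\<Sum>m\<in>?S. dconst (g (Poly_Mapping.lookup (p + q) m)) * f m)"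
    by (rule extend_superset) (auto simp: keys_add)
  also have "\<dots> = (\<Sum>m\<in>?S. dconst (g (Poly_Mapping.lookup p m)) * f m)
      + (\<Sum>m\<in>?S. dconst (g (Poly_Mapping.lookup q m)) * f m)"
    by (simp add: lookup_add add dconst_add distrib_right sum.distrib)
  also have "\<dots> = extend g f p + extend g f q"
    by (simp add: extend_superset[of ?S p] extend_superset[of ?S q])
  finally show ?thesis .
qed

lemma extend_dconst_mult: "extend g f (dconst c * p) = dconst (g c) * extend g f p"
proof -
  have "extend g f (dconst c * p) =
      (\<Sum>m\<in>Poly_Mapping.keys p. dconst (g (Poly_Mapping.lookup (dconst c * p) m)) * f m)"
    by (rule extend_superset) (auto simp: in_keys_iff lookup_dconst_mult)
  then show ?thesis
    by (simp add: extend_def lookup_dconst_mult mult dconst_mult sum_distrib_left mult.assoc)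
qed

lemma extend_0 [simp]: "extend g f 0 = 0"
  by (simp add: extend_def)

lemma extend_dmonom [simp]: "extend g f (dmonom m) = f m"
  by (simp add: extend_def lookup_dmonom one)

lemma extend_sum: "extend g f (\<Sum>i\<in>I. h i) = (\<Sum>i\<in>I. extend g f (h i))"
  by (induction I rule: infinite_finite_induct) (auto simp: extend_add)

lemma extend_mult_hom:
  assumes "\<And>a b. f (a + b) = f a * f b"
  shows "extend g f (p * q) = extend g f p * extend g f q"
proof -
  have "extend g f (p * q) = (\<Sum>a\<in>Poly_Mapping.keys p. \<Sum>b\<in>Poly_Mapping.keys q.
      dconst (g (Poly_Mapping.lookup p a)) * f a * (dconst (g (Poly_Mapping.lookup q b)) * f b))"
    by (subst mult_eq_sum_monoms) (simp add: extend_sum extend_dconst_mult assms mult dconst_mult mult_ac)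
  also have "\<dots> = extend g f p * extend g f q"
    by (simp add: extend_def sum_product)
  finally show ?thesis .
qed

end

interpretation coeff_hom_id: coeff_hom id
  by unfold_locales simp_all

interpretation coeff_hom_cnj: coeff_hom cnj
  by unfold_locales simp_all

abbreviation lin :: "(dmono \<Rightarrow> dpoly) \<Rightarrow> dpoly \<Rightarrow> dpoly" where
  "lin \<equiv> extend id"

lemma lin_dconst: "lin f (dconst c) = dconst c * f 0"
proof -
  have "lin f (dconst c * dmonom 0) = dconst c * f 0"
    by (simp only: coeff_hom_id.extend_dconst_mult coeff_hom_id.extend_dmonom id_apply)
  then show ?thesis
    by simp
qed

lemma lin_uminus: "lin f (- p) = - lin f p"
  using coeff_hom_id.extend_dconst_mult[of f "-1" p] by (simp add: dconst_uminus)

lemma lin_diff: "lin f (p - q) = lin f p - lin f q"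
  using coeff_hom_id.extend_add[of f p "- q"] by (simp add: lin_uminus)

lemma lin_mult_derivation:
  assumes "\<And>a b. f (a + b) = f a * dmonom b + dmonom a * f b"
  shows "lin f (p * q) = lin f p * q + p * lin f q"
proof -
  have "lin f (p * q) = (\<Sum>a\<in>Poly_Mapping.keys p. \<Sum>b\<in>Poly_Mapping.keys q.
      dconst (Poly_Mapping.lookup p a * Poly_Mapping.lookup q b) * f (a + b))"
    by (subst mult_eq_sum_monoms) (simp add: coeff_hom_id.extend_sum coeff_hom_id.extend_dconst_mult)
  also have "\<dots> = (\<Sum>a\<in>Poly_Mapping.keys p. \<Sum>b\<in>Poly_Mapping.keys q.
      dconst (Poly_Mapping.lookup p a) * f a * (dconst (Poly_Mapping.lookup q b) * dmonom b)) +
      (\<Sum>a\<in>Poly_Mapping.keys p. \<Sum>b\<in>Poly_Mapping.keys q.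
      dconst (Poly_Mapping.lookup p a) * dmonom a * (dconst (Poly_Mapping.lookup q b) * f b))"
    by (simp add: assms dconst_mult algebra_simps sum.distrib)
  also have "\<dots> = lin f p * (\<Sum>b\<in>Poly_Mapping.keys q. dconst (Poly_Mapping.lookup q b) * dmonom b)
       + (\<Sum>a\<in>Poly_Mapping.keys p. dconst (Poly_Mapping.lookup p a) * dmonom a) * lin f q"
    by (simp add: extend_def sum_product)
  finally show ?thesis
    by (simp flip: dpoly_eq_sum_monoms)
qed

definition mono_derivation :: "(dvar \<Rightarrow> dpoly) \<Rightarrow> dmono \<Rightarrow> dpoly" where
  "mono_derivation d m = (\<Sum>x\<in>Poly_Mapping.keys m.
      dconst (of_nat (Poly_Mapping.lookup m x)) * dmonom (m - Poly_Mapping.single x 1) * d x)"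

definition derivation :: "(dvar \<Rightarrow> dpoly) \<Rightarrow> dpoly \<Rightarrow> dpoly" where
  "derivation d = lin (mono_derivation d)"

lemma add_diff_single_left:
  assumes "Poly_Mapping.lookup a x \<noteq> 0"
  shows "(a + b - Poly_Mapping.single x 1 :: dmono) = (a - Poly_Mapping.single x 1) + b"
  by (rule poly_mapping_eqI) (use assms in \<open>auto simp: lookup_add lookup_minus lookup_single when_def\<close>)

lemma mono_derivation_add:
  "mono_derivation d (a + b) = mono_derivation d a * dmonom b + dmonom a * mono_derivation d b"
proof -
  define t where "t m x = dconst (of_nat (Poly_Mapping.lookup m x)) *
      dmonom (m - Poly_Mapping.single x 1) * d x" for m x
  have superset: "mono_derivation d m = (\<Sum>x\<in>S. t m x)"
    if "finite S" "Poly_Mapping.keys m \<subseteq> S" for m S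
    unfolding mono_derivation_def t_def
    by (rule sum.mono_neutral_left[OF that]) (auto simp: in_keys_iff)
  have shift: "dconst (of_nat (Poly_Mapping.lookup a x)) * dmonom (a + b - Poly_Mapping.single x 1)
      = dconst (of_nat (Poly_Mapping.lookup a x)) * dmonom (a - Poly_Mapping.single x 1) * dmonom b"
    for a b :: dmono and x
    by (cases "Poly_Mapping.lookup a x = 0") (simp, metis add_diff_single_left dmonom_add mult.assoc)
  have summand: "t (a + b) x = t a x * dmonom b + dmonom a * t b x" for x
  proof -
    have "t (a + b) x = dconst (of_nat (Poly_Mapping.lookup a x)) * dmonom (a + b - Poly_Mapping.single x 1) * d x
        + dconst (of_nat (Poly_Mapping.lookup b x)) * dmonom (b + a - Poly_Mapping.single x 1) * d x"
      by (simp only: t_def lookup_add of_nat_add dconst_add distrib_right add.commute[of b a])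
    also have "\<dots> = t a x * dmonom b + dmonom a * t b x"
      by (simp only: shift t_def mult_ac)
    finally show ?thesis .
  qed
  let ?S = "Poly_Mapping.keys a \<union> Poly_Mapping.keys b"
  have "mono_derivation d (a + b) = (\<Sum>x\<in>?S. t a x * dmonom b + dmonom a * t b x)"
    by (simp add: superset[of ?S] keys_add summand)
  also have "\<dots> = mono_derivation d a * dmonom b + dmonom a * mono_derivation d b"
    by (simp add: superset[of ?S a] superset[of ?S b] sum.distrib sum_distrib_left sum_distrib_right)
  finally show ?thesis .
qed

lemma derivation_add: "derivation d (p + q) = derivation d p + derivation d q"
  by (simp add: derivation_def coeff_hom_id.extend_add)

lemma derivation_dconst_mult: "derivation d (dconst c * p) = dconst c * derivation d p"
  by (simp add: derivation_def coeff_hom_id.extend_dconst_mult)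

lemma derivation_mult: "derivation d (p * q) = derivation d p * q + p * derivation d q"
  by (simp add: derivation_def lin_mult_derivation mono_derivation_add)

lemma derivation_dconst [simp]: "derivation d (dconst c) = 0"
  by (simp add: derivation_def lin_dconst mono_derivation_def)

lemma derivation_sum: "derivation d (\<Sum>i\<in>I. h i) = (\<Sum>i\<in>I. derivation d (h i))"
  by (simp add: derivation_def coeff_hom_id.extend_sum)

lemma derivation_uminus: "derivation d (- p) = - derivation d p"
  by (simp add: derivation_def lin_uminus)

lemma derivation_diff: "derivation d (p - q) = derivation d p - derivation d q"
  by (simp add: derivation_def lin_diff)

lemma derivation_dvarp [simp]: "derivation d (dvarp x) = d x"
  by (simp add: derivation_def dvarp_def mono_derivation_def)

lemma Dx_eq_derivation: "Dx = derivation (\<lambda>x. dvarp (dsucc x))"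
  by (simp add: fun_eq_iff Dx_def derivation_def extend_def Dmono_def mono_derivation_def
      dvarp_def mult.assoc flip: dmonom_add)

lemma pderiv_d_eq_derivation: "pderiv_d x = derivation (\<lambda>y. if y = x then 1 else 0)"
proof
  fix p
  have "dconst (Poly_Mapping.lookup p m * of_nat (Poly_Mapping.lookup m x)) *
      (if x \<in> Poly_Mapping.keys m then dmonom (m - Poly_Mapping.single x 1) else 0)
    = dconst (Poly_Mapping.lookup p m) * mono_derivation (\<lambda>y. if y = x then 1 else 0) m" for m
    by (auto simp: mono_derivation_def dconst_mult in_keys_iff sum.delta' if_distrib[of "\<lambda>t. _ * t"]
        cong: if_cong)
  then show "pderiv_d x p = derivation (\<lambda>y. if y = x then 1 else 0) p"
    by (simp add: pderiv_d_def derivation_def extend_def)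
qed

lemmas Dx_add = derivation_add[of "\<lambda>x. dvarp (dsucc x)", folded Dx_eq_derivation]
lemmas Dx_dconst_mult = derivation_dconst_mult[of "\<lambda>x. dvarp (dsucc x)", folded Dx_eq_derivation]
lemmas Dx_mult = derivation_mult[of "\<lambda>x. dvarp (dsucc x)", folded Dx_eq_derivation]
lemmas Dx_dconst [simp] = derivation_dconst[of "\<lambda>x. dvarp (dsucc x)", folded Dx_eq_derivation]
lemmas Dx_sum = derivation_sum[of "\<lambda>x. dvarp (dsucc x)", folded Dx_eq_derivation]
lemmas Dx_uminus = derivation_uminus[of "\<lambda>x. dvarp (dsucc x)", folded Dx_eq_derivation]
lemmas Dx_diff = derivation_diff[of "\<lambda>x. dvarp (dsucc x)", folded Dx_eq_derivation]
lemmas Dx_dvarp [simp] = derivation_dvarp[of "\<lambda>x. dvarp (dsucc x)", folded Dx_eq_derivation]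

lemma Dx_0 [simp]: "Dx 0 = 0" and Dx_1 [simp]: "Dx 1 = 0" and Dx_of_nat [simp]: "Dx (of_nat n) = 0"
  using Dx_dconst[of 0] Dx_dconst[of 1] Dx_dconst[of "of_nat n"] by simp_all

lemmas pd_add = derivation_add[of "\<lambda>y. if y = x then 1 else 0" for x, folded pderiv_d_eq_derivation]
lemmas pd_dconst_mult =
  derivation_dconst_mult[of "\<lambda>y. if y = x then 1 else 0" for x, folded pderiv_d_eq_derivation]
lemmas pd_mult = derivation_mult[of "\<lambda>y. if y = x then 1 else 0" for x, folded pderiv_d_eq_derivation]
lemmas pd_dconst [simp] =
  derivation_dconst[of "\<lambda>y. if y = x then 1 else 0" for x, folded pderiv_d_eq_derivation]
lemmas pd_sum = derivation_sum[of "\<lambda>y. if y = x then 1 else 0" for x, folded pderiv_d_eq_derivation]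
lemmas pd_uminus = derivation_uminus[of "\<lambda>y. if y = x then 1 else 0" for x, folded pderiv_d_eq_derivation]
lemmas pd_diff = derivation_diff[of "\<lambda>y. if y = x then 1 else 0" for x, folded pderiv_d_eq_derivation]
lemmas pd_dvarp [simp] =
  derivation_dvarp[of "\<lambda>y. if y = x then 1 else 0" for x, folded pderiv_d_eq_derivation]

lemma pd_0 [simp]: "pderiv_d x 0 = 0" and pd_1 [simp]: "pderiv_d x 1 = 0"
  and pd_of_nat [simp]: "pderiv_d x (of_nat n) = 0"
  using pd_dconst[of x 0] pd_dconst[of x 1] pd_dconst[of x "of_nat n"] by simp_all

lemma dswap_dswap [simp]: "dswap (dswap x) = x"
  by (cases x) auto

lemma dswap_dsucc: "dswap (dsucc x) = dsucc (dswap x)"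
  by (cases x) auto

lemma dswap_eq_iff: "dswap x = y \<longleftrightarrow> x = dswap y"
  by auto

lemma lookup_swap_mono: "Poly_Mapping.lookup (swap_mono m) y = Poly_Mapping.lookup m (dswap y)"
proof -
  have "(\<Sum>x\<in>Poly_Mapping.keys m. Poly_Mapping.lookup (Poly_Mapping.single (dswap x) (Poly_Mapping.lookup m x)) y)
     = (\<Sum>x\<in>Poly_Mapping.keys m. if x = dswap y then Poly_Mapping.lookup m x else 0)"
    by (rule sum.cong) (auto simp: lookup_single when_def dswap_eq_iff)
  then show ?thesis
    by (simp add: swap_mono_def lookup_sum sum.delta' in_keys_iff)
qed

lemma swap_mono_add: "swap_mono (a + b) = swap_mono a + swap_mono b"
  by (rule poly_mapping_eqI) (simp add: lookup_swap_mono lookup_add)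

lemma swap_mono_single: "swap_mono (Poly_Mapping.single x n) = Poly_Mapping.single (dswap x) n"
  by (rule poly_mapping_eqI) (auto simp: lookup_swap_mono lookup_single when_def dswap_eq_iff)

lemma conj_d_eq_extend: "conj_d = extend cnj (\<lambda>m. dmonom (swap_mono m))"
  by (simp add: fun_eq_iff conj_d_def extend_def)

lemma conj_add: "conj_d (p + q) = conj_d p + conj_d q"
  by (simp add: conj_d_eq_extend coeff_hom_cnj.extend_add)

lemma conj_dconst_mult: "conj_d (dconst c * p) = dconst (cnj c) * conj_d p"
  by (simp add: conj_d_eq_extend coeff_hom_cnj.extend_dconst_mult)

lemma conj_mult: "conj_d (p * q) = conj_d p * conj_d q"
  by (simp add: conj_d_eq_extend coeff_hom_cnj.extend_mult_hom swap_mono_add dmonom_add)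

lemma conj_sum: "conj_d (\<Sum>i\<in>I. h i) = (\<Sum>i\<in>I. conj_d (h i))"
  by (simp add: conj_d_eq_extend coeff_hom_cnj.extend_sum)

lemma conj_dconst [simp]: "conj_d (dconst c) = dconst (cnj c)"
  by (cases "c = 0") (simp_all add: conj_d_def dconst_def swap_mono_def)

lemma conj_0 [simp]: "conj_d 0 = 0" and conj_1 [simp]: "conj_d 1 = 1"
  using conj_dconst[of 0] conj_dconst[of 1] by simp_all

lemma conj_uminus: "conj_d (- p) = - conj_d p"
  using conj_dconst_mult[of "-1" p] by (simp add: dconst_uminus)

lemma conj_dvarp [simp]: "conj_d (dvarp x) = dvarp (dswap x)"
  by (simp add: conj_d_eq_extend dvarp_def swap_mono_single)

lemma conj_Dx: "conj_d (Dx p) = Dx (conj_d p)"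
  by (induction p rule: dpoly_induct) (auto simp: Dx_add conj_add Dx_mult conj_mult dswap_dsucc)

lemma conj_pd: "conj_d (pderiv_d x p) = pderiv_d (dswap x) (conj_d p)"
  by (induction p rule: dpoly_induct) (auto simp: pd_add conj_add pd_mult conj_mult dswap_eq_iff)

definition restrict_vars :: "(dvar \<Rightarrow> bool) \<Rightarrow> dpoly \<Rightarrow> dpoly" where
  "restrict_vars T = lin (\<lambda>m. if \<forall>x\<in>Poly_Mapping.keys m. T x then dmonom m else 0)"

lemma restrict_vars_add: "restrict_vars T (p + q) = restrict_vars T p + restrict_vars T q"
  by (simp add: restrict_vars_def coeff_hom_id.extend_add)

lemma restrict_vars_dconst_mult: "restrict_vars T (dconst c * p) = dconst c * restrict_vars T p"
  by (simp add: restrict_vars_def coeff_hom_id.extend_dconst_mult)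

lemma restrict_vars_mult: "restrict_vars T (p * q) = restrict_vars T p * restrict_vars T q"
  unfolding restrict_vars_def
  by (rule coeff_hom_id.extend_mult_hom) (auto simp: keys_add_dmono dmonom_add)

lemma restrict_vars_dconst [simp]: "restrict_vars T (dconst c) = dconst c"
  by (simp add: restrict_vars_def lin_dconst)

lemma restrict_vars_sum: "restrict_vars T (\<Sum>i\<in>I. h i) = (\<Sum>i\<in>I. restrict_vars T (h i))"
  by (simp add: restrict_vars_def coeff_hom_id.extend_sum)

lemma restrict_vars_uminus: "restrict_vars T (- p) = - restrict_vars T p"
  by (simp add: restrict_vars_def lin_uminus)

lemma restrict_vars_diff: "restrict_vars T (p - q) = restrict_vars T p - restrict_vars T q"
  by (simp add: restrict_vars_def lin_diff)

lemma restrict_vars_dvarp [simp]: "restrict_vars T (dvarp x) = (if T x then dvarp x else 0)"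
  by (simp add: restrict_vars_def dvarp_def)

lemma restrict_vars_0 [simp]: "restrict_vars T 0 = 0" and restrict_vars_1 [simp]: "restrict_vars T 1 = 1"
  and restrict_vars_of_nat [simp]: "restrict_vars T (of_nat n) = of_nat n"
  using restrict_vars_dconst[of T 0] restrict_vars_dconst[of T 1] restrict_vars_dconst[of T "of_nat n"]
  by simp_all

lemma lookup_restrict_vars: "Poly_Mapping.lookup (restrict_vars T p) m =
   (if \<forall>x\<in>Poly_Mapping.keys m. T x then Poly_Mapping.lookup p m else 0)"
proof -
  have "Poly_Mapping.lookup (restrict_vars T p) m = (\<Sum>m'\<in>Poly_Mapping.keys p.
      if m' = m then (if \<forall>x\<in>Poly_Mapping.keys m. T x then Poly_Mapping.lookup p m else 0) else 0)"
    unfolding restrict_vars_def extend_def lookup_sum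
    by (rule sum.cong) (auto simp: lookup_dconst_mult lookup_dmonom)
  then show ?thesis
    by (simp add: sum.delta in_keys_iff)
qed

definition is_Uv :: "dvar \<Rightarrow> bool" where
  "is_Uv x = (case x of Uv _ \<Rightarrow> True | Rv _ \<Rightarrow> False)"

definition is_Rv :: "dvar \<Rightarrow> bool" where
  "is_Rv x = (case x of Uv _ \<Rightarrow> False | Rv _ \<Rightarrow> True)"

lemma is_Uv_simps [simp]: "is_Uv (Uv k)" "\<not> is_Uv (Rv k)"
  and is_Rv_simps [simp]: "is_Rv (Rv k)" "\<not> is_Rv (Uv k)"
  by (simp_all add: is_Uv_def is_Rv_def)

lemma restrict_vars_Dx:
  assumes "\<And>x. T (dsucc x) = T x"
  shows "restrict_vars T (Dx p) = Dx (restrict_vars T p)"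
  by (induction p rule: dpoly_induct)
    (auto simp: Dx_add restrict_vars_add Dx_mult restrict_vars_mult assms)

lemma restrict_Uv_Dx: "restrict_vars is_Uv (Dx p) = Dx (restrict_vars is_Uv p)"
  and restrict_Rv_Dx: "restrict_vars is_Rv (Dx p) = Dx (restrict_vars is_Rv p)"
  by (rule restrict_vars_Dx, case_tac x, simp_all)+

lemma conj_restrict_Rv: "conj_d (restrict_vars is_Rv p) = restrict_vars is_Uv (conj_d p)"
proof (induction p rule: dpoly_induct)
  case (dvarp x)
  then show ?case
    by (cases x) simp_all
qed (simp_all add: restrict_vars_add conj_add restrict_vars_mult conj_mult)

section \<open>Partial derivatives and the total x-derivative\<close>

lemma dsucc_inj [simp]: "dsucc x = dsucc y \<longleftrightarrow> x = y"
  by (cases x; cases y) auto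

lemma pd_Dx_dsucc: "pderiv_d (dsucc x) (Dx p) = Dx (pderiv_d (dsucc x) p) + pderiv_d x p"
  by (induction p rule: dpoly_induct) (auto simp: Dx_add pd_add Dx_mult pd_mult algebra_simps)

lemma pd_Dx_not_dsucc:
  assumes "\<And>z. dsucc z \<noteq> y"
  shows "pderiv_d y (Dx p) = Dx (pderiv_d y p)"
  by (induction p rule: dpoly_induct) (use assms in \<open>auto simp: Dx_add pd_add Dx_mult pd_mult algebra_simps\<close>)

lemma pd_Dx:
  assumes "v \<in> {Uv, Rv}"
  shows "pderiv_d (v k) (Dx p) = Dx (pderiv_d (v k) p) + (if k = 0 then 0 else pderiv_d (v (k - 1)) p)"
proof (cases k)
  case 0
  have "dsucc z \<noteq> v 0" for z
    using assms by (cases z) auto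
  with 0 show ?thesis
    by (simp add: pd_Dx_not_dsucc)
next
  case (Suc k')
  have "dsucc (v k') = v k"
    using assms Suc by auto
  with Suc show ?thesis
    using pd_Dx_dsucc[of "v k'" p] by simp
qed

lemma pd_Dx_Uv0: "pderiv_d (Uv 0) (Dx p) = Dx (pderiv_d (Uv 0) p)"
  and pd_Dx_Rv0: "pderiv_d (Rv 0) (Dx p) = Dx (pderiv_d (Rv 0) p)"
  using pd_Dx[of Uv 0 p] pd_Dx[of Rv 0 p] by simp_all

lemma pd_commute: "pderiv_d x (pderiv_d y p) = pderiv_d y (pderiv_d x p)"
  by (induction p rule: dpoly_induct) (auto simp: pd_add pd_mult algebra_simps)

lemma lookup_pd: "Poly_Mapping.lookup (pderiv_d x p) m =
   of_nat (Poly_Mapping.lookup m x + 1) * Poly_Mapping.lookup p (m + Poly_Mapping.single x 1)"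
proof -
  have iff: "(x \<in> Poly_Mapping.keys m' \<and> m = m' - Poly_Mapping.single x 1) \<longleftrightarrow>
      m' = m + Poly_Mapping.single x 1" for m'
    by (auto simp: in_keys_iff poly_mapping_eq_iff fun_eq_iff lookup_add lookup_minus lookup_single
        when_def split: if_splits)
  have "Poly_Mapping.lookup (pderiv_d x p) m = (\<Sum>m'\<in>Poly_Mapping.keys p.
      if m' = m + Poly_Mapping.single x 1
      then Poly_Mapping.lookup p m' * of_nat (Poly_Mapping.lookup m' x) else 0)"
    unfolding pderiv_d_def lookup_sum
    by (rule sum.cong) (use iff in \<open>auto simp: lookup_dconst_mult lookup_dmonom\<close>)
  then show ?thesis
    by (simp add: sum.delta' in_keys_iff lookup_add)
qed

lemma pd_eq_0_if_notin_dvars: "x \<notin> dvars p \<Longrightarrow> pderiv_d x p = 0"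
  unfolding pderiv_d_def
  by (rule sum.neutral) (auto simp: dvars_def not_in_keys_iff_lookup_eq_zero)

lemma pd_neq_0_if_in_dvars:
  assumes "x \<in> dvars p"
  shows "pderiv_d x p \<noteq> 0"
proof -
  from assms obtain m where m: "m \<in> Poly_Mapping.keys p" "x \<in> Poly_Mapping.keys m"
    by (auto simp: dvars_def)
  then have "m - Poly_Mapping.single x 1 + Poly_Mapping.single x 1 = m"
    by (intro poly_mapping_eqI) (auto simp: in_keys_iff lookup_add lookup_minus lookup_single when_def)
  then have "Poly_Mapping.lookup (pderiv_d x p) (m - Poly_Mapping.single x 1) \<noteq> 0"
    using m(1) by (simp add: lookup_pd in_keys_iff) (metis of_nat_Suc of_nat_eq_0_iff nat.distinct(1) add.commute)
  then show ?thesis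
    by auto
qed

fun dord :: "dvar \<Rightarrow> nat" where
  "dord (Uv k) = k"
| "dord (Rv k) = k"

lemma dord_dsucc [simp]: "dord (dsucc x) = Suc (dord x)"
  by (cases x) auto

text \<open>If x has maximal order in p, then the derivative of Dx p in dsucc x is the derivative
  of p in x, which does not vanish.\<close>

lemma dvars_eq_empty_if_Dx_eq_0:
  assumes "Dx p = 0"
  shows "dvars p = {}"
proof (rule ccontr)
  assume "dvars p \<noteq> {}"
  then obtain x where x: "x \<in> dvars p" "dord x = Max (dord ` dvars p)"
    by (metis (mono_tags, lifting) Max_in finite_dvars finite_imageI image_iff image_is_empty)
  have "dsucc x \<notin> dvars p"
  proof
    assume "dsucc x \<in> dvars p"
    then have "dord (dsucc x) \<le> Max (dord ` dvars p)"
      by (intro Max_ge) (auto simp del: dord_dsucc)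
    with x(2) show False
      by simp
  qed
  then have "pderiv_d (dsucc x) p = 0"
    by (rule pd_eq_0_if_notin_dvars)
  then have "pderiv_d x p = 0"
    using pd_Dx_dsucc[of x p] assms by simp
  with pd_neq_0_if_in_dvars[OF x(1)] show False ..
qed

lemma Dx_eq_0_imp_dconst:
  assumes "Dx p = 0"
  shows "p = dconst (Poly_Mapping.lookup p 0)"
proof (rule poly_mapping_eqI)
  fix m
  have "m \<in> Poly_Mapping.keys p \<Longrightarrow> m = 0"
    using dvars_eq_empty_if_Dx_eq_0[OF assms] by (auto simp: dvars_def)
  then show "Poly_Mapping.lookup p m = Poly_Mapping.lookup (dconst (Poly_Mapping.lookup p 0)) m"
    by (auto simp: lookup_dconst in_keys_iff)
qed

section \<open>Total derivatives and the Euler operator\<close>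

abbreviation U :: "nat \<Rightarrow> dpoly" where "U k \<equiv> dvarp (Uv k)"
abbreviation R :: "nat \<Rightarrow> dpoly" where "R k \<equiv> dvarp (Rv k)"

lemma funpow_Dx_commute:
  assumes "\<And>p. F (Dx p) = Dx (F p)"
  shows "F ((Dx ^^ k) p) = (Dx ^^ k) (F p)"
  by (induction k) (simp_all add: assms)

lemma funpow_Dx_add: "(Dx ^^ k) (p + q) = (Dx ^^ k) p + (Dx ^^ k) q"
  by (induction k) (simp_all add: Dx_add)

lemma funpow_Dx_dconst_mult: "(Dx ^^ k) (dconst c * p) = dconst c * (Dx ^^ k) p"
  by (induction k) (simp_all add: Dx_dconst_mult)

lemma funpow_Dx_uminus: "(Dx ^^ k) (- p) = - (Dx ^^ k) p"
  by (induction k) (simp_all add: Dx_uminus)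

lemma funpow_Dx_0 [simp]: "(Dx ^^ k) 0 = 0"
  by (induction k) simp_all

lemma funpow_Dx_U [simp]: "(Dx ^^ k) (U m) = U (m + k)"
  by (induction k) simp_all

lemma funpow_Dx_R [simp]: "(Dx ^^ k) (R m) = R (m + k)"
  by (induction k) simp_all

definition exact :: "dpoly \<Rightarrow> bool" where
  "exact p \<longleftrightarrow> (\<exists>L. p = Dx L)"

lemma exact_Dx [simp]: "exact (Dx L)"
  by (auto simp: exact_def)

lemma exact_0 [simp]: "exact 0"
  using exact_Dx[of 0] by simp

lemma exact_add: "exact p \<Longrightarrow> exact q \<Longrightarrow> exact (p + q)"
  by (auto simp: exact_def simp flip: Dx_add)

lemma exact_uminus: "exact p \<Longrightarrow> exact (- p)"
  by (auto simp: exact_def simp flip: Dx_uminus)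

lemma exact_diff: "exact p \<Longrightarrow> exact q \<Longrightarrow> exact (p - q)"
  by (auto simp: exact_def simp flip: Dx_diff)

lemma exact_dconst_mult: "exact p \<Longrightarrow> exact (dconst c * p)"
  by (auto simp: exact_def simp flip: Dx_dconst_mult)

lemma exact_sum: "(\<And>i. i \<in> I \<Longrightarrow> exact (h i)) \<Longrightarrow> exact (\<Sum>i\<in>I. h i)"
  by (induction I rule: infinite_finite_induct) (auto intro: exact_add)

lemma exact_integration_by_parts: "exact (a * (dconst ((-1) ^ k) * (Dx ^^ k) b) - (Dx ^^ k) a * b)"
proof (induction k arbitrary: a)
  case (Suc k)
  have "a * (dconst ((-1) ^ Suc k) * (Dx ^^ Suc k) b) - (Dx ^^ Suc k) a * b =
      Dx a * (dconst ((-1) ^ k) * (Dx ^^ k) b) - (Dx ^^ k) (Dx a) * b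
      - Dx (a * (dconst ((-1) ^ k) * (Dx ^^ k) b))"
    by (simp add: Dx_mult Dx_dconst_mult dconst_uminus algebra_simps flip: funpow_swap1)
  then show ?case
    using Suc.IH[of "Dx a"] by (simp add: exact_diff)
qed simp

definition euler_op :: "(nat \<Rightarrow> dvar) \<Rightarrow> nat \<Rightarrow> dpoly \<Rightarrow> dpoly" where
  "euler_op v M f = (\<Sum>k<M. dconst ((-1) ^ k) * (Dx ^^ k) (pderiv_d (v k) f))"

lemma euler_op_add: "euler_op v M (p + q) = euler_op v M p + euler_op v M q"
  by (simp add: euler_op_def pd_add funpow_Dx_add distrib_left sum.distrib)

lemma euler_op_uminus: "euler_op v M (- p) = - euler_op v M p"
  by (simp add: euler_op_def pd_uminus funpow_Dx_uminus sum_negf)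

lemma euler_op_diff: "euler_op v M (p - q) = euler_op v M p - euler_op v M q"
  using euler_op_add[of v M p "- q"] by (simp add: euler_op_uminus)

lemma conj_euler_op: "conj_d (euler_op Rv M p) = euler_op Uv M (conj_d p)"
  by (simp add: euler_op_def conj_sum conj_mult conj_pd funpow_Dx_commute[of conj_d, OF conj_Dx])

lemma vder_r_superset:
  assumes "finite S" "rorders f \<subseteq> S"
  shows "vder_r f = (\<Sum>k\<in>S. dconst ((-1) ^ k) * (Dx ^^ k) (pderiv_d (Rv k) f))"
  unfolding vder_r_def
  by (rule sum.mono_neutral_left[OF assms]) (auto simp: rorders_def dvars_def pd_eq_0_if_notin_dvars)

lemma vder_r_eq_euler_op:
  assumes "dvars f \<subseteq> {x. dord x < M}"
  shows "vder_r f = euler_op Rv M f"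
  unfolding euler_op_def using assms by (intro vder_r_superset) (auto simp: rorders_def dvars_def)

text \<open>The sum telescopes, and its top term vanishes by hypothesis.\<close>

lemma euler_op_Dx:
  assumes "v \<in> {Uv, Rv}" and "pderiv_d (v M) L = 0"
  shows "euler_op v (Suc M) (Dx L) = 0"
proof -
  have "euler_op v (Suc M) (Dx L) = (\<Sum>k<Suc M. dconst ((-1) ^ k) * (Dx ^^ Suc k) (pderiv_d (v k) L)) +
     (\<Sum>k<Suc M. dconst ((-1) ^ k) * (Dx ^^ k) (if k = 0 then 0 else pderiv_d (v (k - 1)) L))"
    unfolding euler_op_def pd_Dx[OF assms(1)] by (simp add: funpow_Dx_add distrib_left sum.distrib flip: funpow_swap1)
  also have "(\<Sum>k<Suc M. dconst ((-1) ^ k) * (Dx ^^ k) (if k = 0 then 0 else pderiv_d (v (k - 1)) L)) =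
      - (\<Sum>k<M. dconst ((-1) ^ k) * (Dx ^^ Suc k) (pderiv_d (v k) L))"
    by (subst sum.lessThan_Suc_shift) (simp add: dconst_uminus sum_negf flip: funpow_swap1)
  finally show ?thesis
    using assms(2) by simp
qed

lemma Dx_chain_rule:
  assumes "dvars p \<subseteq> {x. dord x < M}"
  shows "Dx p = (\<Sum>k<M. R (Suc k) * pderiv_d (Rv k) p + U (Suc k) * pderiv_d (Uv k) p)"
  using assms
proof (induction p rule: dpoly_induct_dvars)
  case (dvarp x)
  then show ?case
    by (cases x) (simp_all add: sum.distrib if_distrib[of "\<lambda>t. _ * t"] sum.delta cong: if_cong)
next
  case (add a b)
  then show ?case
    by (simp add: Dx_add pd_add distrib_left sum.distrib algebra_simps)
next
  case (mult a b)
  then show ?case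
    by (simp add: Dx_mult pd_mult sum_distrib_left sum_distrib_right sum.distrib algebra_simps)
qed simp

section \<open>Generating functions and conserved densities\<close>

definition \<kappa> :: complex where
  "\<kappa> = 1 / (2 * \<i>)"

lemma Yd_0': "Yd 0 = - dconst \<kappa> * rd"
  and Yd_Suc': "Yd (Suc n) = dconst \<kappa> * (Dx (Yd n) + qd * (\<Sum>k\<le>n. Yd (n - k) * Yd k))"
  by (simp_all add: \<kappa>_def atMost_atLeast0)

declare Yd.simps [simp del] Yd_0' [simp] Yd_Suc' [simp]

unbundle fps_syntax

definition fps_Dx :: "dpoly fps \<Rightarrow> dpoly fps" where
  "fps_Dx f = Abs_fps (\<lambda>n. Dx (f $ n))"

lemma fps_Dx_nth [simp]: "fps_Dx f $ n = Dx (f $ n)"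
  by (simp add: fps_Dx_def)

lemma fps_Dx_add: "fps_Dx (f + g) = fps_Dx f + fps_Dx g"
  by (simp add: fps_eq_iff Dx_add)

lemma fps_Dx_sum: "fps_Dx (\<Sum>i\<in>I. h i) = (\<Sum>i\<in>I. fps_Dx (h i))"
  by (induction I rule: infinite_finite_induct) (auto simp: fps_Dx_add fps_eq_iff)

lemma fps_Dx_mult: "fps_Dx (f * g) = fps_Dx f * g + f * fps_Dx g"
  by (simp add: fps_eq_iff fps_mult_nth Dx_sum Dx_mult sum.distrib)

lemma fps_Dx_const [simp]: "fps_Dx (fps_const c) = fps_const (Dx c)"
  by (simp add: fps_eq_iff)

lemma fps_Dx_X [simp]: "fps_Dx fps_X = 0"
  by (simp add: fps_eq_iff)

lemma fps_Dx_power: "fps_Dx (f ^ Suc n) = of_nat (Suc n) * f ^ n * fps_Dx f"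
  by (induction n) (simp_all add: fps_Dx_mult algebra_simps)

lemma riccati_fps:
  assumes "c * k = 1" and "Z 0 = - dconst k * p"
    and "\<And>n. Z (Suc n) = dconst k * (Dx (Z n) + s * (\<Sum>i\<le>n. Z (n - i) * Z i))"
  shows "fps_const (dconst c) * Abs_fps Z + fps_const p
      = fps_X * (fps_Dx (Abs_fps Z) + fps_const s * Abs_fps Z ^ 2)"
proof (rule fps_ext)
  have ck: "dconst c * (dconst k * a) = a" for a
    by (simp add: mult.assoc [symmetric] flip: dconst_mult) (simp add: assms(1))
  fix n
  show "(fps_const (dconst c) * Abs_fps Z + fps_const p) $ n
      = (fps_X * (fps_Dx (Abs_fps Z) + fps_const s * Abs_fps Z ^ 2)) $ n"
  proof (cases n)
    case 0
    then show ?thesis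
      using ck[of p] by (simp add: assms(2))
  next
    case (Suc m)
    have "(Abs_fps Z ^ 2) $ m = (\<Sum>i\<le>m. Z (m - i) * Z i)"
      by (simp add: power2_eq_square fps_mult_nth atMost_atLeast0 mult.commute)
    then show ?thesis
      using Suc by (simp add: assms(3) ck)
  qed
qed

definition Y_fps :: "dpoly fps" where
  "Y_fps = Abs_fps Yd"

definition conj_Y_fps :: "dpoly fps" where
  "conj_Y_fps = Abs_fps (\<lambda>n. conj_d (Yd n))"

lemma riccati_Y_fps:
  "fps_const (dconst (2 * \<i>)) * Y_fps + fps_const rd = fps_X * (fps_Dx Y_fps + fps_const qd * Y_fps ^ 2)"
  unfolding Y_fps_def by (rule riccati_fps) (simp_all add: \<kappa>_def)

lemma riccati_conj_Y_fps:
  "fps_const (dconst (- (2 * \<i>))) * conj_Y_fps + fps_const qd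
    = fps_X * (fps_Dx conj_Y_fps + fps_const rd * conj_Y_fps ^ 2)"
  unfolding conj_Y_fps_def
  by (rule riccati_fps[where k = "- \<kappa>"])
    (simp_all add: \<kappa>_def conj_mult conj_add conj_sum conj_Dx conj_uminus)

definition YV_fps :: "dpoly fps" where
  "YV_fps = fps_X * Y_fps * conj_Y_fps"

definition density_fps :: "dpoly fps" where
  "density_fps = fps_const qd * Y_fps + fps_const rd * conj_Y_fps"

lemma fps_Dx_YV_fps: "fps_Dx YV_fps = density_fps * (1 - YV_fps)"
proof -
  define c where "c = fps_const (dconst (2 * \<i>))"
  have "fps_const (dconst (- (2 * \<i>))) = - c"
    by (simp add: c_def dconst_uminus)
  then have Y: "fps_X * fps_Dx Y_fps = c * Y_fps + fps_const rd - fps_X * (fps_const qd * Y_fps ^ 2)"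
    and V: "fps_X * fps_Dx conj_Y_fps = - c * conj_Y_fps + fps_const qd - fps_X * (fps_const rd * conj_Y_fps ^ 2)"
    using riccati_Y_fps riccati_conj_Y_fps unfolding c_def by (simp_all add: algebra_simps)
  have "fps_Dx YV_fps = (fps_X * fps_Dx Y_fps) * conj_Y_fps + Y_fps * (fps_X * fps_Dx conj_Y_fps)"
    by (simp add: YV_fps_def fps_Dx_mult algebra_simps)
  also have "\<dots> = density_fps * (1 - YV_fps)"
    unfolding Y V by (simp add: YV_fps_def density_fps_def algebra_simps power2_eq_square)
  finally show ?thesis .
qed

text \<open>Truncations of - log (1 - YV_fps): since YV_fps = O(X), the density is exact degreewise.\<close>

definition log_fps :: "nat \<Rightarrow> dpoly fps" where
  "log_fps m = (\<Sum>k\<in>{1..m}. fps_const (dconst (1 / of_nat k)) * YV_fps ^ k)"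

lemma fps_Dx_log_fps: "fps_Dx (log_fps m) = density_fps * (1 - YV_fps ^ m)"
proof -
  have inverse: "fps_const (dconst (1 / of_nat k)) * of_nat k = (1 :: dpoly fps)" if "k \<noteq> 0" for k
  proof -
    have "(of_nat k :: dpoly fps) = fps_const (dconst (of_nat k))"
      by (simp add: fps_of_nat)
    then have "fps_const (dconst (1 / of_nat k)) * of_nat k = fps_const (dconst (1 / of_nat k * of_nat k))"
      by (simp only: fps_const_mult dconst_mult)
    with that show ?thesis
      by simp
  qed
  have summand: "fps_Dx (fps_const (dconst (1 / of_nat (Suc k))) * YV_fps ^ Suc k) = YV_fps ^ k * fps_Dx YV_fps"
    for k
  proof -
    have "fps_Dx (fps_const (dconst (1 / of_nat (Suc k))) * YV_fps ^ Suc k)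
        = (fps_const (dconst (1 / of_nat (Suc k))) * of_nat (Suc k)) * (YV_fps ^ k * fps_Dx YV_fps)"
      by (simp only: fps_Dx_mult fps_Dx_power fps_Dx_const Dx_dconst fps_const_0_eq_0 mult_zero_left
          add_0_left mult.assoc)
    then show ?thesis
      by (simp only: inverse nat.distinct(1) mult_1 simp_thms)
  qed
  have "fps_Dx (log_fps m) = (\<Sum>k<m. YV_fps ^ k) * fps_Dx YV_fps"
    unfolding log_fps_def fps_Dx_sum One_nat_def sum.atLeast1_atMost_eq summand
    by (simp add: sum_distrib_right)
  also have "\<dots> = density_fps * (1 - YV_fps ^ m)"
    by (simp add: fps_Dx_YV_fps one_diff_power_eq mult_ac)
  finally show ?thesis .
qed

lemma density_fps_nth_eq_Dx: "density_fps $ n = Dx (log_fps (Suc n) $ n)"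
proof -
  have "density_fps * YV_fps ^ Suc n = fps_X ^ Suc n * (density_fps * (Y_fps * conj_Y_fps) ^ Suc n)"
    by (simp add: YV_fps_def power_mult_distrib mult_ac)
  then have "(density_fps * YV_fps ^ Suc n) $ n = 0"
    by (simp only: fps_X_power_mult_nth) simp
  moreover have "density_fps = fps_Dx (log_fps (Suc n)) + density_fps * YV_fps ^ Suc n"
    by (simp add: fps_Dx_log_fps algebra_simps)
  ultimately show ?thesis
    by (metis add_0_right fps_Dx_nth fps_add_nth)
qed

lemma exact_conserved_density: "exact (qd * Yd n + conj_d (qd * Yd n))"
proof -
  have "density_fps $ n = qd * Yd n + conj_d (qd * Yd n)"
    by (simp add: density_fps_def Y_fps_def conj_Y_fps_def conj_mult del: Yd_Suc' Yd_0')
  then show ?thesis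
    using density_fps_nth_eq_Dx by (metis exact_Dx)
qed

section \<open>The mass flux\<close>

lemma dvars_bounded: "\<exists>M. dvars p \<subseteq> {x. dord x < M}"
proof -
  have "finite (dord ` dvars p)"
    by simp
  then obtain M where "\<forall>n\<in>dord ` dvars p. n < M"
    by (meson finite_nat_set_iff_bounded)
  then show ?thesis
    by auto
qed

lemma conj_euler_op_eq:
  assumes "H + conj_d H = Dx L" and "dvars L \<subseteq> {x. dord x < M}"
  shows "conj_d (euler_op Rv (Suc M) H) = - euler_op Uv (Suc M) H"
proof -
  have "pderiv_d (Uv M) L = 0"
    using assms(2) by (intro pd_eq_0_if_notin_dvars) auto
  then have "euler_op Uv (Suc M) (Dx L) = 0"
    by (intro euler_op_Dx) auto
  moreover have "conj_d H = Dx L - H"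
    using assms(1) by (simp add: algebra_simps)
  ultimately show ?thesis
    by (simp add: conj_euler_op euler_op_diff)
qed

lemma exact_euler_op_pairing:
  assumes "dvars H \<subseteq> {x. dord x < M}"
  shows "exact (R 1 * euler_op Rv M H + U 1 * euler_op Uv M H - Dx H)"
proof -
  have "R 1 * euler_op Rv M H + U 1 * euler_op Uv M H - Dx H =
      (\<Sum>k<M. R 1 * (dconst ((-1) ^ k) * (Dx ^^ k) (pderiv_d (Rv k) H)) - (Dx ^^ k) (R 1) * pderiv_d (Rv k) H) +
      (\<Sum>k<M. U 1 * (dconst ((-1) ^ k) * (Dx ^^ k) (pderiv_d (Uv k) H)) - (Dx ^^ k) (U 1) * pderiv_d (Uv k) H)"
    unfolding Dx_chain_rule[OF assms] euler_op_def
    by (simp add: sum_distrib_left sum_subtractf sum.distrib algebra_simps)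
  then show ?thesis
    by (simp only:) (intro exact_add exact_sum exact_integration_by_parts)
qed

lemma exact_dt_mass:
  assumes "1 \<le> j"
  shows "exact (dt_mass j)"
proof -
  define H where "H = qd * Yd (2 * j - 1)"
  obtain L where L: "H + conj_d H = Dx L"
    using exact_conserved_density unfolding H_def exact_def by blast
  obtain m1 m2 where "dvars H \<subseteq> {x. dord x < m1}" "dvars L \<subseteq> {x. dord x < m2}"
    using dvars_bounded by metis
  then obtain M where M: "dvars H \<subseteq> {x. dord x < M}" "dvars L \<subseteq> {x. dord x < M}"
    by (metis (no_types, lifting) Collect_mono_iff max.strict_coboundedI1 max.strict_coboundedI2 subset_eq)
  define A where "A = euler_op Rv (Suc M) H"
  define B where "B = euler_op Uv (Suc M) H"
  define c where "c = \<i> * (2 * alpha_d j)"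
  have "dvars H \<subseteq> {x. dord x < Suc M}"
    using M(1) by auto
  then have "hier_rhs j = dconst (2 * alpha_d j) * Dx A"
    by (simp add: hier_rhs_def A_def H_def vder_r_eq_euler_op)
  then have ut: "ut_d j = - (dconst c * Dx A)"
    by (simp add: ut_d_def c_def dconst_mult dconst_uminus)
  have "cnj c = - c"
    by (simp add: c_def alpha_d_def)
  then have "conj_d (ut_d j) = - (dconst c * Dx B)"
    using conj_euler_op_eq[OF L M(2)]
    by (simp add: ut conj_uminus conj_mult conj_Dx A_def B_def dconst_uminus Dx_uminus)
  moreover have "Dx (rd * A) + Dx (qd * B) - (R 1 * A + U 1 * B) = rd * Dx A + qd * Dx B"
    by (simp add: Dx_mult)
  ultimately have dt: "dt_mass j = - (dconst c * (Dx (rd * A) + Dx (qd * B) - (R 1 * A + U 1 * B)))"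
    by (simp add: dt_mass_def ut algebra_simps)
  have "exact (R 1 * A + U 1 * B - Dx H)"
    unfolding A_def B_def by (rule exact_euler_op_pairing) fact
  then have "exact (R 1 * A + U 1 * B)"
    using exact_add[OF _ exact_Dx[of H]] by fastforce
  then have "exact (Dx (rd * A) + Dx (qd * B) - (R 1 * A + U 1 * B))"
    by (rule exact_diff[OF exact_add[OF exact_Dx exact_Dx]])
  then show ?thesis
    unfolding dt by (intro exact_uminus exact_dconst_mult)
qed

lemma Dx_mass_flux:
  assumes "1 \<le> j"
  shows "Dx (mass_flux j) = dt_mass j"
proof -
  obtain F where F: "Dx F = dt_mass j"
    using exact_dt_mass[OF assms] by (auto simp: exact_def)
  let ?F = "F - dconst (Poly_Mapping.lookup F 0)"
  have "Dx ?F = dt_mass j \<and> Poly_Mapping.lookup ?F 0 = 0"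
    using F by (simp add: Dx_diff lookup_minus lookup_dconst)
  moreover have "G = ?F" if "Dx G = dt_mass j \<and> Poly_Mapping.lookup G 0 = 0" for G
  proof -
    have "Dx (G - ?F) = 0"
      using that F by (simp add: Dx_diff)
    then have "G - ?F = dconst (Poly_Mapping.lookup (G - ?F) 0)"
      by (rule Dx_eq_0_imp_dconst)
    then show ?thesis
      using that by (simp add: lookup_minus lookup_dconst)
  qed
  ultimately have "mass_flux j = ?F"
    unfolding mass_flux_def by (rule the_equality)
  then show ?thesis
    using F by (simp add: Dx_diff)
qed

section \<open>The hierarchy and the gauge factor at r = 0\<close>

lemma restrict_Uv_Yd: "restrict_vars is_Uv (Yd n) = 0"
proof (induction n rule: less_induct)
  case (less n)
  show ?case
  proof (cases n)
    case 0
    then show ?thesis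
      by (simp add: restrict_vars_mult restrict_vars_uminus)
  next
    case (Suc m)
    then have "(\<Sum>k\<le>m. restrict_vars is_Uv (Yd (m - k)) * restrict_vars is_Uv (Yd k)) = 0"
      using less by (intro sum.neutral) auto
    with Suc less show ?thesis
      by (simp add: restrict_vars_mult restrict_vars_add restrict_vars_sum restrict_Uv_Dx)
  qed
qed

lemma restrict_Uv_pd_Rv_Yd:
  "restrict_vars is_Uv (pderiv_d (Rv k) (Yd n)) = (if k = n then dconst (- (\<kappa> ^ Suc n)) else 0)"
proof (induction n arbitrary: k)
  case 0
  then show ?case
    by (simp add: pd_mult pd_uminus restrict_vars_mult restrict_vars_uminus dconst_uminus)
next
  case (Suc n)
  have "restrict_vars is_Uv (pderiv_d (Rv k) (Yd (Suc n))) =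
      dconst \<kappa> * restrict_vars is_Uv (pderiv_d (Rv k) (Dx (Yd n)))"
    by (simp add: pd_mult pd_add pd_sum restrict_vars_mult restrict_vars_add restrict_vars_sum
        restrict_Uv_Yd)
  then show ?case
    by (auto simp: pd_Dx[of Rv] restrict_vars_add restrict_Uv_Dx Suc.IH simp flip: dconst_mult)
qed

lemma restrict_Rv_pd_Rv_Yd:
  "restrict_vars is_Rv (pderiv_d (Rv k) (Yd n)) = (if k = n then dconst (- (\<kappa> ^ Suc n)) else 0)"
proof (induction n arbitrary: k)
  case 0
  then show ?case
    by (simp add: pd_mult pd_uminus restrict_vars_mult restrict_vars_uminus dconst_uminus)
next
  case (Suc n)
  have "restrict_vars is_Rv (pderiv_d (Rv k) (Yd (Suc n))) =
      dconst \<kappa> * restrict_vars is_Rv (pderiv_d (Rv k) (Dx (Yd n)))"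
    by (simp add: pd_mult pd_add restrict_vars_mult restrict_vars_add)
  then show ?case
    by (auto simp: pd_Dx[of Rv] restrict_vars_add restrict_Rv_Dx Suc.IH simp flip: dconst_mult)
qed

lemma restrict_Uv_pd2_Rv_Yd_sum:
  "restrict_vars is_Uv (pderiv_d (Rv 0) (pderiv_d (Rv k) (\<Sum>i\<le>n. Yd (n - i) * Yd i))) =
    (if k = n then dconst (2 * \<kappa> ^ (n + 2)) else 0)"
proof -
  have "restrict_vars is_Uv (pderiv_d (Rv 0) (pderiv_d (Rv k) (Yd (n - i) * Yd i))) =
      (if i = 0 \<and> k = n then dconst (\<kappa> ^ (n + 2)) else 0) + (if i = n \<and> k = n then dconst (\<kappa> ^ (n + 2)) else 0)"
    if "i \<le> n" for i
  proof -
    have "\<kappa> ^ Suc (n - i) * \<kappa> ^ Suc i = \<kappa> ^ (n + 2)"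
      using that by (simp flip: power_add)
    then show ?thesis
      using that by (auto simp: pd_mult pd_add restrict_vars_add restrict_vars_mult restrict_Uv_Yd
          restrict_Uv_pd_Rv_Yd mult_ac simp flip: dconst_mult)
  qed
  then show ?thesis
    by (simp add: pd_sum restrict_vars_sum sum.distrib sum.delta flip: dconst_add)
qed

lemma restrict_Uv_pd2_Rv_Yd:
  "restrict_vars is_Uv (pderiv_d (Rv 0) (pderiv_d (Rv k) (Yd n))) =
    (if k < n then dconst (2 * \<kappa> ^ (n + 2) * of_nat (n choose k)) * U (n - 1 - k) else 0)"
proof (induction n arbitrary: k)
  case 0
  then show ?case
    by (simp add: pd_mult pd_uminus)
next
  case (Suc n)
  define A where "A = 2 * \<kappa> ^ (n + 2)"
  have choose_n: "n choose i = 1" if "\<not> i < n" "i < Suc n" for i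
    using that by (simp add: less_Suc_eq)
  have "restrict_vars is_Uv (pderiv_d (Rv 0) (pderiv_d (Rv k) (Yd (Suc n)))) = dconst \<kappa> *
      (Dx (restrict_vars is_Uv (pderiv_d (Rv 0) (pderiv_d (Rv k) (Yd n))))
       + (if k = 0 then 0 else restrict_vars is_Uv (pderiv_d (Rv 0) (pderiv_d (Rv (k - 1)) (Yd n))))
       + U 0 * (if k = n then dconst A else 0))"
    by (simp add: A_def pd_mult pd_add restrict_vars_mult restrict_vars_add restrict_Uv_pd2_Rv_Yd_sum
        pd_Dx[of Rv] pd_Dx_Rv0 restrict_Uv_Dx)
  also have "\<dots> = (if k < Suc n then dconst (\<kappa> * A * (of_nat (n choose k)
      + (if k = 0 then 0 else of_nat (n choose (k - 1))))) * U (n - k) else 0)"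
    unfolding Suc.IH A_def
    by (cases k) (auto simp: Dx_dconst_mult dconst_mult dconst_add Suc_diff_Suc choose_n algebra_simps
        simp del: dconst_numeral dconst_of_nat)
  also have "\<dots> = (if k < Suc n then dconst (2 * \<kappa> ^ (Suc n + 2) * of_nat (Suc n choose k))
      * U (Suc n - 1 - k) else 0)"
    by (cases k) (simp_all add: A_def algebra_simps)
  finally show ?case .
qed

lemma finite_rorders [simp]: "finite (rorders f)"
proof -
  have "rorders f = Rv -` dvars f"
    by (auto simp: rorders_def dvars_def)
  then show ?thesis
    by (simp add: finite_vimageI inj_def)
qed

lemma funpow_Dx_U0_dconst: "(Dx ^^ n) (U 0 * dconst c) = dconst c * U n"
  by (induction n) (simp_all add: Dx_mult mult.commute Dx_dconst_mult)

lemma restrict_Uv_vder_r_Yd: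
  "restrict_vars is_Uv (vder_r (qd * Yd N)) = dconst ((-1) ^ N * (- (\<kappa> ^ Suc N))) * U N"
proof -
  let ?S = "rorders (qd * Yd N) \<union> {N}"
  have vder_r: "vder_r (qd * Yd N) = (\<Sum>k\<in>?S. dconst ((-1) ^ k) * (Dx ^^ k) (pderiv_d (Rv k) (qd * Yd N)))"
    by (rule vder_r_superset) auto
  have "restrict_vars is_Uv (vder_r (qd * Yd N)) = (\<Sum>k\<in>?S. dconst ((-1) ^ k) *
      (Dx ^^ k) (restrict_vars is_Uv (pderiv_d (Rv k) (qd * Yd N))))"
    by (simp add: vder_r restrict_vars_sum restrict_vars_dconst_mult
        funpow_Dx_commute[of "restrict_vars is_Uv", OF restrict_Uv_Dx])
  also have "\<dots> = (\<Sum>k\<in>?S. if k = N then dconst ((-1) ^ N) * (Dx ^^ N) (U 0 * dconst (- (\<kappa> ^ Suc N))) else 0)"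
    by (rule sum.cong) (auto simp: pd_mult restrict_vars_mult restrict_Uv_pd_Rv_Yd restrict_Uv_Yd)
  also have "\<dots> = dconst ((-1) ^ N * (- (\<kappa> ^ Suc N))) * U N"
    by (simp only: funpow_Dx_U0_dconst mult.assoc [symmetric] dconst_mult [symmetric]) (simp add: sum.delta)
  finally show ?thesis .
qed

lemma restrict_Rv_pd_Uv0_vder_r_Yd:
  assumes "N > 0"
  shows "restrict_vars is_Rv (pderiv_d (Uv 0) (vder_r (qd * Yd N))) = 0"
proof -
  let ?S = "rorders (qd * Yd N) \<union> {N}"
  have vder_r: "vder_r (qd * Yd N) = (\<Sum>k\<in>?S. dconst ((-1) ^ k) * (Dx ^^ k) (pderiv_d (Rv k) (qd * Yd N)))"
    by (rule vder_r_superset) auto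
  have "restrict_vars is_Rv (pderiv_d (Uv 0) (vder_r (qd * Yd N))) = (\<Sum>k\<in>?S. dconst ((-1) ^ k) *
      (Dx ^^ k) (restrict_vars is_Rv (pderiv_d (Rv k) (pderiv_d (Uv 0) (qd * Yd N)))))"
    by (simp add: vder_r pd_sum restrict_vars_sum pd_dconst_mult restrict_vars_dconst_mult
        funpow_Dx_commute[of "restrict_vars is_Rv", OF restrict_Rv_Dx]
        funpow_Dx_commute[of "pderiv_d (Uv 0)", OF pd_Dx_Uv0] pd_commute[of "Uv 0"])
  also have "\<dots> = (\<Sum>k\<in>?S. if k = N then dconst ((-1) ^ N) * (Dx ^^ N) (dconst (- (\<kappa> ^ Suc N))) else 0)"
    by (rule sum.cong) (auto simp: pd_mult pd_add restrict_vars_mult restrict_vars_add restrict_Rv_pd_Rv_Yd)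
  also have "\<dots> = 0"
    using assms by (cases N) (simp_all add: funpow_swap1)
  finally show ?thesis .
qed

lemma restrict_Uv_pd_Rv0_vder_r_Yd:
  "restrict_vars is_Uv (pderiv_d (Rv 0) (vder_r (qd * Yd N))) =
    (\<Sum>k<N. dconst ((-1) ^ k * (2 * \<kappa> ^ (N + 2) * of_nat (N choose k))) * (Dx ^^ k) (U 0 * U (N - 1 - k)))"
proof -
  let ?S = "rorders (qd * Yd N) \<union> {..<N}"
  have vder_r: "vder_r (qd * Yd N) = (\<Sum>k\<in>?S. dconst ((-1) ^ k) * (Dx ^^ k) (pderiv_d (Rv k) (qd * Yd N)))"
    by (rule vder_r_superset) auto
  have "restrict_vars is_Uv (pderiv_d (Rv 0) (vder_r (qd * Yd N))) = (\<Sum>k\<in>?S. dconst ((-1) ^ k) *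
      (Dx ^^ k) (restrict_vars is_Uv (pderiv_d (Rv 0) (pderiv_d (Rv k) (qd * Yd N)))))"
    by (simp add: vder_r pd_sum restrict_vars_sum pd_dconst_mult restrict_vars_dconst_mult
        funpow_Dx_commute[of "restrict_vars is_Uv", OF restrict_Uv_Dx]
        funpow_Dx_commute[of "pderiv_d (Rv 0)", OF pd_Dx_Rv0])
  also have "\<dots> = (\<Sum>k<N. dconst ((-1) ^ k * (2 * \<kappa> ^ (N + 2) * of_nat (N choose k))) *
      (Dx ^^ k) (U 0 * U (N - 1 - k)))"
    by (rule sum.mono_neutral_cong_right)
      (auto simp: pd_mult restrict_vars_mult restrict_Uv_pd2_Rv_Yd mult.left_commute[of "U 0"]
        funpow_Dx_dconst_mult dconst_mult mult.assoc simp del: dconst_of_nat dconst_numeral)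
  finally show ?thesis .
qed

lemma two_alpha_\<kappa>_power:
  assumes "1 \<le> j"
  shows "2 * alpha_d j * \<kappa> ^ (2 * j) = (-1) ^ j"
proof -
  have "2 * alpha_d j = 2 ^ (2 * j)"
    using assms by (simp add: alpha_d_def flip: power_Suc)
  moreover have "\<i> ^ (2 * j) = (-1) ^ j"
    by (simp add: power_mult)
  then have "\<kappa> ^ (2 * j) = (-1) ^ j / 2 ^ (2 * j)"
    by (simp add: \<kappa>_def power_divide power_mult_distrib field_simps)
  ultimately show ?thesis
    by simp
qed

lemma restrict_Uv_hier_rhs:
  assumes "1 \<le> j"
  shows "restrict_vars is_Uv (hier_rhs j) = dconst ((-1) ^ j) * U (2 * j)"
proof -
  have "2 * alpha_d j * ((-1) ^ (2 * j - 1) * - (\<kappa> ^ Suc (2 * j - 1))) = (-1) ^ j"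
    using assms two_alpha_\<kappa>_power[OF assms] by simp
  then show ?thesis
    using assms by (simp add: hier_rhs_def restrict_vars_dconst_mult restrict_Uv_Dx restrict_Uv_vder_r_Yd
        Dx_dconst_mult mult.assoc [symmetric] flip: dconst_mult)
qed

lemma restrict_Rv_pd_Uv0_hier_rhs:
  assumes "1 \<le> j"
  shows "restrict_vars is_Rv (pderiv_d (Uv 0) (hier_rhs j)) = 0"
  using assms by (simp add: hier_rhs_def pd_dconst_mult restrict_vars_dconst_mult pd_Dx_Uv0 restrict_Rv_Dx
      restrict_Rv_pd_Uv0_vder_r_Yd)

lemma restrict_Uv_pd_Rv0_dt_mass:
  assumes "1 \<le> j"
  shows "restrict_vars is_Uv (pderiv_d (Rv 0) (dt_mass j)) = dconst (- \<i> * (-1) ^ j) * U (2 * j)"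
proof -
  have "pderiv_d (Rv 0) (conj_d (ut_d j)) = conj_d (pderiv_d (Uv 0) (ut_d j))"
    by (simp add: conj_pd)
  then have "restrict_vars is_Uv (pderiv_d (Rv 0) (conj_d (ut_d j))) = 0"
    using restrict_Rv_pd_Uv0_hier_rhs[OF assms]
    by (simp add: ut_d_def pd_dconst_mult restrict_vars_dconst_mult flip: conj_restrict_Rv)
  then have "restrict_vars is_Uv (pderiv_d (Rv 0) (dt_mass j)) = restrict_vars is_Uv (ut_d j)"
    by (simp add: dt_mass_def pd_add pd_mult restrict_vars_add restrict_vars_mult)
  then show ?thesis
    using restrict_Uv_hier_rhs[OF assms]
    by (simp add: ut_d_def restrict_vars_dconst_mult mult.assoc [symmetric] flip: dconst_mult)
qed

lemma restrict_Uv_pd_Rv0_mass_flux: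
  assumes "1 \<le> j"
  obtains c where "restrict_vars is_Uv (pderiv_d (Rv 0) (mass_flux j))
      = dconst (- \<i> * (-1) ^ j) * U (2 * j - 1) + dconst c"
proof -
  define X where "X = restrict_vars is_Uv (pderiv_d (Rv 0) (mass_flux j))"
  have "Dx X = restrict_vars is_Uv (pderiv_d (Rv 0) (dt_mass j))"
    by (simp add: X_def Dx_mass_flux[OF assms] flip: restrict_Uv_Dx pd_Dx_Rv0)
  also have "\<dots> = Dx (dconst (- \<i> * (-1) ^ j) * U (2 * j - 1))"
    using assms by (simp add: restrict_Uv_pd_Rv0_dt_mass Dx_dconst_mult)
  finally have "Dx (X - dconst (- \<i> * (-1) ^ j) * U (2 * j - 1)) = 0"
    by (simp add: Dx_diff)
  then have "X - dconst (- \<i> * (-1) ^ j) * U (2 * j - 1) = dconst (Poly_Mapping.lookup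
      (X - dconst (- \<i> * (-1) ^ j) * U (2 * j - 1)) 0)"
    by (rule Dx_eq_0_imp_dconst)
  then show ?thesis
    by (intro that[of "Poly_Mapping.lookup (X - dconst (- \<i> * (-1) ^ j) * U (2 * j - 1)) 0"])
      (simp add: X_def algebra_simps)
qed

lemma restrict_Uv_gG: "restrict_vars is_Uv (gG k) = (if k = 0 then 1 else 0)"
  by (induction k) (simp_all add: restrict_vars_diff restrict_vars_mult restrict_Uv_Dx)

lemma restrict_Uv_pd_Rv0_gG:
  "restrict_vars is_Uv (pderiv_d (Rv 0) (gG k)) = (if k = 0 then 0 else dconst (- \<i>) * U (k - 1))"
proof (induction k)
  case (Suc k)
  have "restrict_vars is_Uv (pderiv_d (Rv 0) (gG (Suc k))) =
      Dx (restrict_vars is_Uv (pderiv_d (Rv 0) (gG k))) - dconst \<i> * U 0 * restrict_vars is_Uv (gG k)"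
    by (simp add: pd_diff pd_mult pd_add pd_Dx_Rv0 restrict_vars_diff restrict_vars_add restrict_vars_mult
        restrict_Uv_Dx restrict_Uv_gG)
  then show ?case
    using Suc.IH by (cases k) (simp_all add: restrict_Uv_gG dconst_uminus Dx_dconst_mult Dx_uminus
        del: gG.simps)
qed simp

lemma restrict_Uv_pd_Rv0_gauge_sum:
  "restrict_vars is_Uv (pderiv_d (Rv 0)
      (\<Sum>k\<in>{1..n}. dconst (of_nat (n choose k)) * gG k * dvarp (Uv (n - k)))) =
    dconst (- \<i>) * (\<Sum>k\<in>{1..n}. of_nat (n choose k) * (U (k - 1) * U (n - k)))"
  unfolding pd_sum restrict_vars_sum sum_distrib_left
  by (rule sum.cong) (auto simp: pd_mult restrict_vars_mult restrict_Uv_pd_Rv0_gG mult_ac)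

section \<open>Coefficients of the bad monomials\<close>

definition pair_mono :: "nat \<Rightarrow> nat \<Rightarrow> dmono" where
  "pair_mono a b = Poly_Mapping.single (Uv a) 1 + Poly_Mapping.single (Uv b) 1"

lemma coeff_bad_mono:
  "coeff_d p (bad_mono j l) = Poly_Mapping.lookup (restrict_vars is_Uv (pderiv_d (Rv 0) p)) (pair_mono (2 * j - 1 - l) l)"
proof -
  have "bad_mono j l = pair_mono (2 * j - 1 - l) l + Poly_Mapping.single (Rv 0) 1"
    by (simp add: bad_mono_def pair_mono_def add_ac)
  moreover have "Poly_Mapping.lookup (pair_mono (2 * j - 1 - l) l) (Rv 0) = 0"
    by (simp add: pair_mono_def lookup_add lookup_single)
  moreover have "\<forall>x\<in>Poly_Mapping.keys (pair_mono (2 * j - 1 - l) l). is_Uv x"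
    by (auto simp: pair_mono_def keys_add_dmono)
  ultimately show ?thesis
    by (simp add: coeff_d_def lookup_restrict_vars lookup_pd)
qed

lemma single_add_single_eq_iff:
  assumes "z \<noteq> w"
  shows "Poly_Mapping.single x 1 + Poly_Mapping.single y 1 = (Poly_Mapping.single z 1 + Poly_Mapping.single w 1 :: dmono)
     \<longleftrightarrow> (x = z \<and> y = w) \<or> (x = w \<and> y = z)"
proof
  assume eq: "Poly_Mapping.single x 1 + Poly_Mapping.single y 1 = (Poly_Mapping.single z 1 + Poly_Mapping.single w 1 :: dmono)"
  have "Poly_Mapping.lookup (Poly_Mapping.single x 1 + Poly_Mapping.single y 1 :: dmono) v =
      Poly_Mapping.lookup (Poly_Mapping.single z 1 + Poly_Mapping.single w 1 :: dmono) v" for v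
    by (simp only: eq)
  from this[of z] this[of w] assms show "(x = z \<and> y = w) \<or> (x = w \<and> y = z)"
    by (auto simp: lookup_add lookup_single when_def split: if_splits)
qed (auto simp: add.commute)

lemma lookup_U_mult_U:
  assumes "a \<noteq> b"
  shows "Poly_Mapping.lookup (U i * U k) (pair_mono a b) = (if (i = a \<and> k = b) \<or> (i = b \<and> k = a) then 1 else 0)"
  using single_add_single_eq_iff[of "Uv a" "Uv b" "Uv i" "Uv k"] assms
  by (auto simp: pair_mono_def dvarp_def lookup_dmonom simp flip: dmonom_add)

lemma funpow_Dx_U_mult_U:
  "(Dx ^^ n) (U a * U b) = (\<Sum>i\<le>n. of_nat (n choose i) * (U (a + i) * U (b + n - i)))"
proof (induction n)
  case (Suc n)
  define f where "f i = U (a + i) * U (b + Suc n - i)" for i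
  have "(Dx ^^ Suc n) (U a * U b) = (\<Sum>i\<le>n. of_nat (n choose i) * f (Suc i))
      + (\<Sum>i\<le>n. of_nat (n choose i) * f i)"
    by (simp add: Suc Dx_sum Dx_mult f_def Suc_diff_le algebra_simps sum.distrib)
  also have "(\<Sum>i\<le>n. of_nat (n choose i) * f i) = (\<Sum>i\<le>Suc n. of_nat (n choose i) * f i)"
    by (simp add: binomial_eq_0)
  also have "(\<Sum>i\<le>n. of_nat (n choose i) * f (Suc i)) =
      (\<Sum>i\<le>Suc n. (if i = 0 then 0 else of_nat (n choose (i - 1))) * f i)"
    by (subst sum.atMost_Suc_shift) simp
  also have "(\<Sum>i\<le>Suc n. (if i = 0 then 0 else of_nat (n choose (i - 1))) * f i)
      + (\<Sum>i\<le>Suc n. of_nat (n choose i) * f i) = (\<Sum>i\<le>Suc n. of_nat (Suc n choose i) * f i)"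
    unfolding sum.distrib [symmetric]
    by (rule sum.cong [OF refl], rename_tac i, case_tac i) (simp_all add: algebra_simps)
  finally show ?case
    by (simp add: f_def)
qed simp

lemma lookup_funpow_Dx_U0_mult_U:
  assumes "a \<noteq> b" "a + b = t + n"
  shows "Poly_Mapping.lookup ((Dx ^^ n) (U 0 * U t)) (pair_mono a b) = of_nat (n choose a) + of_nat (n choose b)"
proof -
  have "Poly_Mapping.lookup ((Dx ^^ n) (U 0 * U t)) (pair_mono a b) =
      (\<Sum>i\<le>n. if i = a then of_nat (n choose i) else 0) + (\<Sum>i\<le>n. if i = b then of_nat (n choose i) else 0)"
    unfolding funpow_Dx_U_mult_U lookup_sum sum.distrib [symmetric]
  proof (rule sum.cong)
    fix i
    have "(i = a \<and> t + n - i = b) \<or> (i = b \<and> t + n - i = a) \<longleftrightarrow> i = a \<or> i = b"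
      using assms by auto
    then show "Poly_Mapping.lookup (of_nat (n choose i) * (U (0 + i) * U (t + n - i))) (pair_mono a b) =
        (if i = a then of_nat (n choose i) else 0) + (if i = b then of_nat (n choose i) else 0)"
      using assms(1) by (simp add: lookup_dconst_mult lookup_U_mult_U flip: dconst_of_nat)
  qed simp
  also have "\<dots> = of_nat (n choose a) + of_nat (n choose b)"
    by (simp add: sum.delta binomial_eq_0)
  finally show ?thesis .
qed

lemma lookup_pascal_sum:
  assumes "a \<noteq> l" "a + l + 1 = n"
  shows "Poly_Mapping.lookup (\<Sum>k\<in>{1..n}. of_nat (n choose k) * (U (k - 1) * U (n - k))) (pair_mono a l)
    = of_nat (Suc n choose Suc l)"
proof -
  have "Poly_Mapping.lookup (\<Sum>k\<in>{1..n}. of_nat (n choose k) * (U (k - 1) * U (n - k))) (pair_mono a l) =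
      (\<Sum>k\<in>{1..n}. (if k = a + 1 then of_nat (n choose k) else 0) + (if k = l + 1 then of_nat (n choose k) else 0))"
    unfolding lookup_sum
  proof (rule sum.cong)
    fix k
    assume "k \<in> {1..n}"
    then have "(k - 1 = a \<and> n - k = l) \<or> (k - 1 = l \<and> n - k = a) \<longleftrightarrow> k = a + 1 \<or> k = l + 1"
      using assms by auto
    then show "Poly_Mapping.lookup (of_nat (n choose k) * (U (k - 1) * U (n - k))) (pair_mono a l) =
        (if k = a + 1 then of_nat (n choose k) else 0) + (if k = l + 1 then of_nat (n choose k) else 0)"
      using assms(1) by (simp add: lookup_dconst_mult lookup_U_mult_U flip: dconst_of_nat)
  qed simp
  also have "\<dots> = of_nat (n choose (a + 1)) + of_nat (n choose (l + 1))"
    using assms(2) by (simp add: sum.distrib sum.delta)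
  also have "n choose (a + 1) = n choose l"
  proof -
    have "a + 1 = n - l"
      using assms(2) by simp
    then show ?thesis
      using assms(2) binomial_symmetric[of l n] by simp
  qed
  finally show ?thesis
    by simp
qed

lemma alternating_sum_choose_mult_choose: "(\<Sum>k\<le>N. (-1::int)^k * of_nat (N choose k) * of_nat (k choose a)) = (if a = N then (-1)^N else 0)"
proof (induction N arbitrary: a)
  case 0 then show ?case by simp
next
  case (Suc N)
  have split: "(\<Sum>k\<le>Suc N. (-1::int)^k * of_nat (Suc N choose k) * of_nat (k choose a)) =
     (\<Sum>k\<le>Suc N. (-1::int)^k * of_nat (N choose k) * of_nat (k choose a)) +
     (\<Sum>k\<le>Suc N. (-1::int)^k * (if k = 0 then 0 else of_nat (N choose (k - 1))) * of_nat (k choose a))"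
  proof (subst sum.distrib[symmetric], rule sum.cong[OF refl])
    fix k show "(-1::int)^k * of_nat (Suc N choose k) * of_nat (k choose a) =
      (-1::int)^k * of_nat (N choose k) * of_nat (k choose a) + (-1::int)^k * (if k = 0 then 0 else of_nat (N choose (k - 1))) * of_nat (k choose a)"
      by (cases k) (simp_all add: algebra_simps)
  qed
  have first: "(\<Sum>k\<le>Suc N. (-1::int)^k * of_nat (N choose k) * of_nat (k choose a)) =
      (\<Sum>k\<le>N. (-1::int)^k * of_nat (N choose k) * of_nat (k choose a))"
    by (simp add: binomial_eq_0)
  have second: "(\<Sum>k\<le>Suc N. (-1::int)^k * (if k = 0 then 0 else of_nat (N choose (k - 1))) * of_nat (k choose a)) =
      - (\<Sum>k\<le>N. (-1::int)^k * of_nat (N choose k) * of_nat (Suc k choose a))"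
    by (subst sum.atMost_Suc_shift) (simp add: sum_negf[symmetric])
  have eq: "(\<Sum>k\<le>Suc N. (-1::int)^k * of_nat (Suc N choose k) * of_nat (k choose a)) =
     (\<Sum>k\<le>N. (-1::int)^k * of_nat (N choose k) * of_nat (k choose a)) -
     (\<Sum>k\<le>N. (-1::int)^k * of_nat (N choose k) * of_nat (Suc k choose a))"
    unfolding split first second by simp
  show ?case
  proof (cases a)
    case 0
    have "(\<Sum>k\<le>N. (-1::int)^k * of_nat (N choose k) * of_nat (Suc k choose a)) =
       (\<Sum>k\<le>N. (-1::int)^k * of_nat (N choose k) * of_nat (k choose a))"
      using 0 by simp
    then show ?thesis using eq 0 by simp
  next
    case (Suc a')
    have "(\<Sum>k\<le>N. (-1::int)^k * of_nat (N choose k) * of_nat (Suc k choose a)) =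
       (\<Sum>k\<le>N. (-1::int)^k * of_nat (N choose k) * of_nat (k choose a')) +
       (\<Sum>k\<le>N. (-1::int)^k * of_nat (N choose k) * of_nat (k choose a))"
      using Suc by (simp add: sum.distrib[symmetric] algebra_simps)
    then show ?thesis using Suc.IH[of a'] Suc.IH[of a] Suc eq by simp
  qed
qed

lemma alternating_sum_choose_mult_Suc_choose:
  assumes "a \<le> N" "odd N"
  shows "(\<Sum>k<N. (-1::int) ^ k * of_nat (N choose k) * of_nat (Suc k choose a)) =
     of_nat (Suc N choose a) - (if a = N then 1 else 0)"
proof -
  have "N \<noteq> 0"
    using assms(2) odd_pos by auto
  have "(\<Sum>k\<le>N. (-1::int) ^ k * of_nat (N choose k) * of_nat (Suc k choose a)) = - (if a = N then 1 else 0)"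
  proof (cases a)
    case 0
    then show ?thesis
      using alternating_sum_choose_mult_choose[of N 0] \<open>N \<noteq> 0\<close> by simp
  next
    case (Suc a')
    then have "(\<Sum>k\<le>N. (-1::int) ^ k * of_nat (N choose k) * of_nat (Suc k choose a)) =
        (\<Sum>k\<le>N. (-1::int) ^ k * of_nat (N choose k) * of_nat (k choose a')) +
        (\<Sum>k\<le>N. (-1::int) ^ k * of_nat (N choose k) * of_nat (k choose a))"
      by (simp add: sum.distrib [symmetric] algebra_simps)
    then show ?thesis
      using alternating_sum_choose_mult_choose[of N a'] alternating_sum_choose_mult_choose[of N a] Suc assms
      by auto
  qed
  then show ?thesis
    using assms by (simp add: lessThan_Suc_atMost [symmetric])
qed

lemma bad_coefficient_sum:
  assumes "l \<le> N" "odd N"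
  shows "(\<Sum>k<N. (-1::int) ^ k * of_nat (N choose k) * (of_nat (Suc k choose (N - l)) + of_nat (Suc k choose l))) =
     of_nat (Suc (Suc N) choose Suc l) - (if l = 0 then 1 else 0) - (if l = N then 1 else 0)"
proof -
  have "(\<Sum>k<N. (-1::int) ^ k * of_nat (N choose k) * (of_nat (Suc k choose (N - l)) + of_nat (Suc k choose l))) =
      (\<Sum>k<N. (-1::int) ^ k * of_nat (N choose k) * of_nat (Suc k choose (N - l))) +
      (\<Sum>k<N. (-1::int) ^ k * of_nat (N choose k) * of_nat (Suc k choose l))"
    by (simp add: sum.distrib [symmetric] algebra_simps)
  also have "\<dots> = of_nat (Suc N choose (N - l)) - (if N - l = N then 1 else 0)
      + (of_nat (Suc N choose l) - (if l = N then 1 else 0))"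
    using alternating_sum_choose_mult_Suc_choose[of "N - l" N] alternating_sum_choose_mult_Suc_choose[of l N] assms
    by simp
  also have "Suc N choose (N - l) = Suc N choose Suc l"
    using assms binomial_symmetric[of "Suc l" "Suc N"] by simp
  also have "N - l = N \<longleftrightarrow> l = 0"
    using assms by auto
  finally show ?thesis
    by simp
qed

lemma two_alpha_two_\<kappa>_power:
  assumes "1 \<le> j"
  shows "2 * alpha_d j * (2 * \<kappa> ^ (2 * j + 1)) = \<i> * (-1) ^ (j + 1)"
proof -
  have "2 * \<kappa> = - \<i>"
    by (simp add: \<kappa>_def)
  moreover have "2 * alpha_d j * (2 * \<kappa> ^ (2 * j + 1)) = (2 * alpha_d j * \<kappa> ^ (2 * j)) * (2 * \<kappa>)"
    by (simp add: mult_ac)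
  ultimately show ?thesis
    by (simp add: two_alpha_\<kappa>_power[OF assms])
qed

lemma restrict_Uv_pd_Rv0_hier_lhs:
  assumes "N = 2 * j - 1"
  shows "restrict_vars is_Uv (pderiv_d (Rv 0) (hier_lhs j)) = dconst (2 * alpha_d j) * (\<Sum>k<N.
      dconst ((-1) ^ k * (2 * \<kappa> ^ (N + 2) * of_nat (N choose k))) * (Dx ^^ Suc k) (U 0 * U (N - 1 - k)))"
  using assms
  by (simp add: hier_lhs_def hier_rhs_def pd_add pd_dconst_mult restrict_vars_add restrict_vars_dconst_mult
      pd_Dx_Rv0 restrict_Uv_Dx restrict_Uv_pd_Rv0_vder_r_Yd Dx_sum Dx_dconst_mult del: dconst_of_nat)

lemma coeff_hier_lhs_bad_mono:
  assumes "1 \<le> j" and "l \<le> 2 * j - 1"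
  shows "coeff_d (hier_lhs j) (bad_mono j l) =
           \<i> * (-1) ^ (j + 1) * (of_nat ((2 * j + 1) choose (l + 1))
              - (if l = 0 then 1 else 0) - (if l = 2 * j - 1 then 1 else 0))"
proof -
  define N where "N = 2 * j - 1"
  have "odd N" "l \<le> N" "N + 2 = 2 * j + 1"
    using assms by (simp_all add: N_def)
  then have "N - l \<noteq> l"
    by presburger
  have "Poly_Mapping.lookup ((Dx ^^ Suc k) (U 0 * U (N - 1 - k))) (pair_mono (N - l) l)
      = of_nat (Suc k choose (N - l)) + of_nat (Suc k choose l)" if "k < N" for k
    using that \<open>l \<le> N\<close> by (intro lookup_funpow_Dx_U0_mult_U \<open>N - l \<noteq> l\<close>) simp
  moreover have "coeff_d p (bad_mono j l) =
      Poly_Mapping.lookup (restrict_vars is_Uv (pderiv_d (Rv 0) p)) (pair_mono (N - l) l)" for p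
    by (simp add: coeff_bad_mono N_def)
  ultimately have "coeff_d (hier_lhs j) (bad_mono j l) = 2 * alpha_d j * (\<Sum>k<N.
      (-1) ^ k * (2 * \<kappa> ^ (N + 2) * of_nat (N choose k)) *
      (of_nat (Suc k choose (N - l)) + of_nat (Suc k choose l)))"
    by (simp add: restrict_Uv_pd_Rv0_hier_lhs[OF N_def] lookup_sum lookup_dconst_mult del: funpow.simps)
  also have "\<dots> = (2 * alpha_d j * (2 * \<kappa> ^ (2 * j + 1))) * of_int (\<Sum>k<N. (-1::int) ^ k *
      of_nat (N choose k) * (of_nat (Suc k choose (N - l)) + of_nat (Suc k choose l)))"
    unfolding \<open>N + 2 = 2 * j + 1\<close> of_int_sum sum_distrib_left
    by (rule sum.cong) (simp_all add: mult_ac)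
  also have "\<dots> = \<i> * (-1) ^ (j + 1) * (of_nat ((2 * j + 1) choose (l + 1))
      - (if l = 0 then 1 else 0) - (if l = 2 * j - 1 then 1 else 0))"
    unfolding bad_coefficient_sum[OF \<open>l \<le> N\<close> \<open>odd N\<close>] two_alpha_two_\<kappa>_power[OF assms(1)]
    using \<open>N + 2 = 2 * j + 1\<close> by (simp add: N_def)
  finally show ?thesis .
qed

lemma coeff_gaugeP_bad_mono:
  assumes "1 \<le> j" and "l \<le> 2 * j - 1"
  shows "coeff_d (gaugeP j) (bad_mono j l) =
           - (\<i> * (-1) ^ (j + 1) * (of_nat ((2 * j + 1) choose (l + 1))
              - (if l = 0 then 1 else 0) - (if l = 2 * j - 1 then 1 else 0)))"
proof -
  define N where "N = 2 * j - 1"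
  define e where "e = - \<i> * (-1) ^ j"
  have "odd N" "l \<le> N" "Suc N = 2 * j"
    using assms by (simp_all add: N_def)
  then have "N - l \<noteq> l"
    by presburger
  obtain c where flux: "restrict_vars is_Uv (pderiv_d (Rv 0) (mass_flux j)) = dconst e * U N + dconst c"
    using restrict_Uv_pd_Rv0_mass_flux[OF assms(1)] unfolding e_def N_def .
  have "restrict_vars is_Uv (pderiv_d (Rv 0) (gaugeP j)) = U 0 * (dconst e * U N + dconst c)
      + dconst ((-1) ^ (j + 1)) * (dconst (- \<i>) *
        (\<Sum>k\<in>{1..Suc N}. of_nat (Suc N choose k) * (U (k - 1) * U (Suc N - k))))"
    unfolding \<open>Suc N = 2 * j\<close> restrict_Uv_pd_Rv0_gauge_sum [symmetric] flux [symmetric]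
    by (simp add: gaugeP_def pd_add pd_mult pd_dconst_mult restrict_vars_add restrict_vars_mult
        restrict_vars_dconst_mult)
  moreover have "U 0 * (dconst e * U N + dconst c) = dconst e * (U 0 * U N) + dconst c * U 0"
    by (simp add: algebra_simps)
  moreover have "Poly_Mapping.lookup (U 0 * U N) (pair_mono (N - l) l) = (if l = 0 \<or> l = N then 1 else 0)"
    using \<open>N - l \<noteq> l\<close> \<open>l \<le> N\<close> by (auto simp: lookup_U_mult_U)
  moreover have "Poly_Mapping.lookup (U 0) (pair_mono (N - l) l) = 0"
    using \<open>N - l \<noteq> l\<close> single_add_single_eq_iff[of "Uv (N - l)" "Uv l"]
    by (auto simp: lookup_dvarp pair_mono_def poly_mapping_eq_iff fun_eq_iff lookup_add lookup_single
        when_def dest: spec[of _ "Uv l"])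
  moreover have "Poly_Mapping.lookup (\<Sum>k\<in>{1..Suc N}. of_nat (Suc N choose k) * (U (k - 1) * U (Suc N - k)))
      (pair_mono (N - l) l) = of_nat (Suc (Suc N) choose Suc l)"
    using \<open>N - l \<noteq> l\<close> \<open>l \<le> N\<close> by (intro lookup_pascal_sum) auto
  moreover have "coeff_d p (bad_mono j l) =
      Poly_Mapping.lookup (restrict_vars is_Uv (pderiv_d (Rv 0) p)) (pair_mono (N - l) l)" for p
    by (simp add: coeff_bad_mono N_def)
  ultimately have "coeff_d (gaugeP j) (bad_mono j l) =
      e * (if l = 0 \<or> l = N then 1 else 0) + (-1) ^ (j + 1) * - \<i> * of_nat (Suc (Suc N) choose Suc l)"
    by (simp only: lookup_add lookup_dconst_mult) simp
  also have "\<dots> = - (\<i> * (-1) ^ (j + 1) * (of_nat ((2 * j + 1) choose (l + 1))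
      - (if l = 0 then 1 else 0) - (if l = 2 * j - 1 then 1 else 0)))"
    using \<open>odd N\<close> \<open>Suc N = 2 * j\<close> odd_pos[of N] by (auto simp: e_def N_def algebra_simps)
  finally show ?thesis .
qed

theorem lemma2p6:
  fixes j l :: nat
  assumes "1 \<le> j" and "l \<le> 2 * j - 1"
  shows "coeff_d (hier_lhs j) (bad_mono j l) =
           \<i> * (-1) ^ (j + 1) * (of_nat ((2 * j + 1) choose (l + 1))
              - (if l = 0 then 1 else 0) - (if l = 2 * j - 1 then 1 else 0))
       \<and> coeff_d (gaugeP j) (bad_mono j l) =
           - (\<i> * (-1) ^ (j + 1) * (of_nat ((2 * j + 1) choose (l + 1))
              - (if l = 0 then 1 else 0) - (if l = 2 * j - 1 then 1 else 0)))"
  using coeff_hier_lhs_bad_mono[OF assms] coeff_gaugeP_bad_mono[OF assms] ..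

end
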